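(* Let $\Gamma$ be a finitely generated semigroup with identity $e$, $\rho:\Gamma\to\mathrm{End}(G)$ an endomorphism action with $\rho(e)=\mathrm{Id}$ on a solenoid $G$, and $A$ a $\rho$-basis of $\widehat G$. Then for every $C>0$ there exists $\epsilon>0$ such that $B_A(\epsilon)\subset E(B^*_A(C))$.
   Context: A solenoid is a compact connected finite-dimensional metrizable abelian group (dual $\widehat G$ torsion-free of finite rank). $L(G)$ is the real vector space of homomorphisms $\widehat G\to\mathbb R$. $E:L(G)\to G$ is the unique homomorphism with $\chi(E(p))=e^{2\pi i p(\chi)}$ for all $p\in L(G)$, $\chi\in\widehat G$. $\widehat\rho(\gamma)(\chi)=\chi\circ\rho(\gamma)$. A $\rho$-basis is a set $A\subset\widehat G$ generating $\widehat G$ as an abelian group with $A=\bigcup_{\gamma}\widehat\rho(\gamma)(F)$ for some finite $F\subset\widehat G$. With $\delta(z)=\inf\{|t|:e^{2\pi it}=z\}$ for $z\in\mathbb S^1$: $B_A(r)=\{g\in G:\sup_{\chi\in A}\delta(\chi(g))<r\}$ and $B^*_A(r)=\{p\in L(G):\sup_{\chi\in A}|p(\chi)|<r\}$. *)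

theory Defs
  imports "HOL-Analysis.Analysis"
begin

text \<open>We model the solenoid G through its (discrete) dual group \<open>'x\<close>:
  G is the group of all homomorphisms \<open>'x \<rightarrow> S^1\<close>, with the topology of
  pointwise convergence (product topology on \<open>'x \<Rightarrow> complex\<close>).
  By Pontryagin duality, every solenoid arises in this way from a torsion-free
  abelian group \<open>'x\<close> of finite rank, and its dual is identified with \<open>'x\<close>
  via evaluation \<open>c(g) = g c\<close>.\<close>

inductive_set agroup_span :: "'a::ab_group_add set \<Rightarrow> 'a set" for S where
  zero: "0 \<in> agroup_span S"
| gen: "s \<in> S \<Longrightarrow> s \<in> agroup_span S"
| add: "a \<in> agroup_span S \<Longrightarrow> b \<in> agroup_span S \<Longrightarrow> a + b \<in> agroup_span S"
| neg: "a \<in> agroup_span S \<Longrightarrow> - a \<in> agroup_span S"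

fun nsmul :: "nat \<Rightarrow> 'a::monoid_add \<Rightarrow> 'a" where
  "nsmul 0 x = 0"
| "nsmul (Suc n) x = x + nsmul n x"

definition torsion_free :: "'a::ab_group_add set \<Rightarrow> bool" where
  "torsion_free X \<longleftrightarrow> (\<forall>x\<in>X. \<forall>n>0. nsmul n x = 0 \<longrightarrow> x = 0)"

definition finite_rank :: "'a::ab_group_add set \<Rightarrow> bool" where
  "finite_rank X \<longleftrightarrow> (\<exists>S\<subseteq>X. finite S \<and> (\<forall>x\<in>X. \<exists>n>0. nsmul n x \<in> agroup_span S))"

definition dual_group :: "('x::ab_group_add \<Rightarrow> complex) set" where
  "dual_group = {g. (\<forall>x. norm (g x) = 1) \<and> (\<forall>x y. g (x + y) = g x * g y)}"

definition lie_alg :: "('x::ab_group_add \<Rightarrow> real) set" where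
  "lie_alg = {p. \<forall>x y. p (x + y) = p x + p y}"

definition expG :: "('x::ab_group_add \<Rightarrow> real) \<Rightarrow> 'x \<Rightarrow> complex" where
  "expG p = (\<lambda>c. cis (2 * pi * p c))"

definition delta_circ :: "complex \<Rightarrow> real" where
  "delta_circ z = Inf {\<bar>t\<bar> | t. cis (2 * pi * t) = z}"

definition ballA :: "'x::ab_group_add set \<Rightarrow> real \<Rightarrow> ('x \<Rightarrow> complex) set" where
  "ballA A r = {g \<in> dual_group. (SUP c\<in>A. ereal (delta_circ (g c))) < ereal r}"

definition ballA_star :: "'x::ab_group_add set \<Rightarrow> real \<Rightarrow> ('x \<Rightarrow> real) set" where
  "ballA_star A r = {p \<in> lie_alg. (SUP c\<in>A. ereal \<bar>p c\<bar>) < ereal r}"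

definition cont_end :: "(('x::ab_group_add \<Rightarrow> complex) \<Rightarrow> ('x \<Rightarrow> complex)) \<Rightarrow> bool" where
  "cont_end f \<longleftrightarrow> f ` dual_group \<subseteq> dual_group
     \<and> (\<forall>g\<in>dual_group. \<forall>h\<in>dual_group. f (\<lambda>c. g c * h c) = (\<lambda>c. f g c * f h c))
     \<and> continuous_on dual_group f"

text \<open>Dual endomorphism: \<widehat>f(c) = c \<circ> f, viewed as an element of 'x.\<close>
definition dual_end :: "(('x::ab_group_add \<Rightarrow> complex) \<Rightarrow> ('x \<Rightarrow> complex)) \<Rightarrow> 'x \<Rightarrow> 'x" where
  "dual_end f c = (THE y. \<forall>g\<in>dual_group. g y = f g c)"

inductive_set monoid_span :: "'m::monoid_mult set \<Rightarrow> 'm set" for S where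
  one: "1 \<in> monoid_span S"
| gen: "s \<in> S \<Longrightarrow> s \<in> monoid_span S"
| mult: "a \<in> monoid_span S \<Longrightarrow> b \<in> monoid_span S \<Longrightarrow> a * b \<in> monoid_span S"

definition finitely_generated_monoid :: "'m::monoid_mult set \<Rightarrow> bool" where
  "finitely_generated_monoid M \<longleftrightarrow> (\<exists>S. finite S \<and> S \<subseteq> M \<and> monoid_span S = M)"

definition endo_action :: "('m::monoid_mult \<Rightarrow> ('x::ab_group_add \<Rightarrow> complex) \<Rightarrow> ('x \<Rightarrow> complex)) \<Rightarrow> bool" where
  "endo_action \<rho> \<longleftrightarrow> (\<forall>\<gamma>. cont_end (\<rho> \<gamma>))
     \<and> (\<forall>\<gamma> \<delta>. \<forall>g\<in>dual_group. \<rho> (\<gamma> * \<delta>) g = \<rho> \<gamma> (\<rho> \<delta> g))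
     \<and> (\<forall>g\<in>dual_group. \<rho> 1 g = g)"

definition rho_basis :: "('m::monoid_mult \<Rightarrow> ('x::ab_group_add \<Rightarrow> complex) \<Rightarrow> ('x \<Rightarrow> complex)) \<Rightarrow> 'x set \<Rightarrow> bool" where
  "rho_basis \<rho> A \<longleftrightarrow> agroup_span A = UNIV
     \<and> (\<exists>F. finite F \<and> A = (\<Union>\<gamma>. dual_end (\<rho> \<gamma>) ` F))"

end

(* Pick S \<subseteq> A mapping to a basis of \<rat> \<otimes> \<widehat>G. Every g \<in> G has the lift p_g \<in> L(G) extending
   s \<mapsto> Arg (g s) / 2\<pi> \<rat>-linearly from S. If g is \<epsilon>-small on A, then p_g agrees with
   Arg (g q) / 2\<pi> at every q \<in> A with a representation n q = \<Sum> m_s s such that (n + \<Sum> |m_s|) \<epsilon> \<le> 1: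
   multiplied by n, the two values differ by an integer of modulus < 1. Choose \<epsilon> for the finitely
   many q in F and in \<widehat>\<rho>(\<gamma>)(S), \<gamma> a generator of \<Gamma>. Since the points that are \<epsilon>-small on A form a
   \<rho>-invariant set, induction over words in the generators gives p_(\<rho>(\<gamma>) g) = p_g \<circ> \<widehat>\<rho>(\<gamma>), so p_g
   is exact on all of A = \<Union>\<gamma>. \<widehat>\<rho>(\<gamma>)(F); hence E(p_g) = g and |p_g| < \<epsilon> on A.
   That \<widehat>\<rho>(\<gamma>) is well defined is Pontryagin duality for G = Hom(\<widehat>G, S\<^sup>1): a continuous character
   of G is trivial on the annihilator of some finite T, as S\<^sup>1 has no small subgroups; T lies in the
   \<int>-span of a \<rat>-basis S of \<widehat>G, since finitely generated torsion-free groups are free; and along the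
   one-parameter subgroups of G dual to S the character is t \<mapsto> e^(2\<pi>ikt), so it is evaluation at a point. *)

theory Submission
  imports Defs
begin

lemma nsmul_zero_right [simp]: "nsmul n (0::'a::ab_group_add) = 0"
  by (induction n) auto

lemma nsmul_add_right: "nsmul n (x + y) = nsmul n x + nsmul n (y::'a::ab_group_add)"
  by (induction n) (auto simp: algebra_simps)

lemma nsmul_minus_right: "nsmul n (- x) = - nsmul n (x::'a::ab_group_add)"
  by (induction n) (auto simp: algebra_simps)

lemma nsmul_eq_mult: "nsmul n (x::'a::ring_1) = of_nat n * x"
  by (induction n) (auto simp: algebra_simps)

definition zsmul :: "int \<Rightarrow> 'a::ab_group_add \<Rightarrow> 'a" where
  "zsmul k x = (if 0 \<le> k then nsmul (nat k) x else - nsmul (nat (- k)) x)"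

lemma zsmul_zero_left [simp]: "zsmul 0 x = 0"
  by (simp add: zsmul_def)

lemma zsmul_one [simp]: "zsmul 1 x = x"
  by (simp add: zsmul_def)

lemma zsmul_of_nat: "zsmul (int n) x = nsmul n x"
  by (simp add: zsmul_def)

lemma zsmul_eq_mult: "zsmul k (x::'a::ring_1) = of_int k * x"
  by (simp add: zsmul_def nsmul_eq_mult)

lemma zsmul_add_one: "zsmul (k + 1) x = zsmul k x + x"
proof (cases "0 \<le> k")
  case True
  then have "nat (k + 1) = Suc (nat k)" by simp
  with True show ?thesis by (simp add: zsmul_def add.commute)
next
  case False
  show ?thesis
  proof (cases "k = -1")
    case False
    with \<open>\<not> 0 \<le> k\<close> have "nat (- k) = Suc (nat (- (k + 1)))" by simp
    with \<open>\<not> 0 \<le> k\<close> False show ?thesis by (simp add: zsmul_def algebra_simps)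
  qed (simp add: zsmul_def)
qed

lemma zsmul_add_left: "zsmul (k + l) x = zsmul k x + zsmul l (x::'a::ab_group_add)"
proof (induction l rule: int_induct[where k = 0])
  case (step1 i)
  then show ?case using zsmul_add_one[of "k + i" x] zsmul_add_one[of i x] by (simp add: algebra_simps)
next
  case (step2 i)
  then show ?case using zsmul_add_one[of "k + i - 1" x] zsmul_add_one[of "i - 1" x] by (simp add: algebra_simps)
qed simp

lemma zsmul_minus_left: "zsmul (- k) x = - zsmul k (x::'a::ab_group_add)"
  using zsmul_add_left[of k "- k" x] by (simp add: eq_neg_iff_add_eq_0 add.commute)

lemma zsmul_diff_left: "zsmul (k - l) x = zsmul k x - zsmul l (x::'a::ab_group_add)"
  using zsmul_add_left[of k "- l" x] by (simp add: zsmul_minus_left)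

lemma zsmul_add_right: "zsmul k (x + y) = zsmul k x + zsmul k (y::'a::ab_group_add)"
  by (simp add: zsmul_def nsmul_add_right)

lemma zsmul_minus_right: "zsmul k (- x) = - zsmul k (x::'a::ab_group_add)"
  by (simp add: zsmul_def nsmul_minus_right)

lemma zsmul_zero_right [simp]: "zsmul k (0::'a::ab_group_add) = 0"
  by (simp add: zsmul_def)

lemma zsmul_mult: "zsmul (k * l) x = zsmul k (zsmul l (x::'a::ab_group_add))"
  by (induction k rule: int_induct[where k = 0])
    (simp_all add: distrib_right left_diff_distrib zsmul_add_left zsmul_diff_left)

lemma zsmul_sum_right: "zsmul k (sum f B) = (\<Sum>b\<in>B. zsmul k (f b :: 'a::ab_group_add))"
  by (induction B rule: infinite_finite_induct) (auto simp: zsmul_add_right)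

definition add_subgroup :: "'a::ab_group_add set \<Rightarrow> bool" where
  "add_subgroup H \<longleftrightarrow> 0 \<in> H \<and> (\<forall>x\<in>H. \<forall>y\<in>H. x + y \<in> H) \<and> (\<forall>x\<in>H. - x \<in> H)"

lemma add_subgroupD:
  assumes "add_subgroup H"
  shows "0 \<in> H" "x \<in> H \<Longrightarrow> y \<in> H \<Longrightarrow> x + y \<in> H" "x \<in> H \<Longrightarrow> - x \<in> H"
  using assms by (auto simp: add_subgroup_def)

lemma add_subgroup_diff: "add_subgroup H \<Longrightarrow> x \<in> H \<Longrightarrow> y \<in> H \<Longrightarrow> x - y \<in> H"
  using add_subgroupD[of H] by (metis diff_conv_add_uminus)

lemma add_subgroup_zsmul: "add_subgroup H \<Longrightarrow> x \<in> H \<Longrightarrow> zsmul k x \<in> H"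
proof -
  assume H: "add_subgroup H" and x: "x \<in> H"
  have "nsmul n x \<in> H" for n by (induction n) (auto intro: add_subgroupD[OF H] x)
  then show ?thesis using add_subgroupD(3)[OF H] by (simp add: zsmul_def)
qed

lemma add_subgroup_sum: "add_subgroup H \<Longrightarrow> (\<And>b. b \<in> B \<Longrightarrow> f b \<in> H) \<Longrightarrow> sum f B \<in> H"
  by (induction B rule: infinite_finite_induct) (simp_all add: add_subgroupD(1,2))

lemma agroup_span_subset: "add_subgroup H \<Longrightarrow> S \<subseteq> H \<Longrightarrow> agroup_span S \<subseteq> H"
proof
  fix x assume "x \<in> agroup_span S" "add_subgroup H" "S \<subseteq> H"
  then show "x \<in> H" by (induction x rule: agroup_span.induct) (auto simp: add_subgroupD)
qed

definition zcomb :: "'a::ab_group_add set \<Rightarrow> ('a \<Rightarrow> int) \<Rightarrow> 'a" where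
  "zcomb B m = (\<Sum>b\<in>B. zsmul (m b) b)"

definition zspan :: "'a::ab_group_add set \<Rightarrow> 'a set" where
  "zspan B = range (zcomb B)"

definition indep :: "'a::ab_group_add set \<Rightarrow> bool" where
  "indep B \<longleftrightarrow> finite B \<and> (\<forall>m. zcomb B m = 0 \<longrightarrow> (\<forall>b\<in>B. m b = 0))"

text \<open>For an abelian group \<open>X\<close>, \<open>rspan B\<close> is the preimage of the \<open>\<rat>\<close>-span of \<open>B\<close> in \<open>\<rat> \<otimes> X\<close>, and
  a \<open>rat_basis\<close> of \<open>X\<close> is a finite subset mapping to a \<open>\<rat>\<close>-basis of \<open>\<rat> \<otimes> X\<close>.\<close>

definition rspan :: "'a::ab_group_add set \<Rightarrow> 'a set" where
  "rspan B = {x. \<exists>n>0. zsmul n x \<in> zspan B}"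

definition rat_basis :: "'a::ab_group_add set \<Rightarrow> bool" where
  "rat_basis S \<longleftrightarrow> indep S \<and> rspan S = UNIV"

lemma indep_finite: "indep B \<Longrightarrow> finite B"
  by (simp add: indep_def)

lemma rat_basisD:
  assumes "rat_basis S"
  shows "finite S" "indep S" "\<exists>n m. n > 0 \<and> zsmul n x = zcomb S m"
proof -
  show "finite S" "indep S" using assms by (auto simp: rat_basis_def indep_def)
  have "x \<in> rspan S" using assms by (simp add: rat_basis_def)
  then show "\<exists>n m. n > 0 \<and> zsmul n x = zcomb S m" by (auto simp: rspan_def zspan_def)
qed

lemma zcomb_in_add_subgroup: "add_subgroup H \<Longrightarrow> B \<subseteq> H \<Longrightarrow> zcomb B m \<in> H"
  unfolding zcomb_def by (rule add_subgroup_sum) (auto intro: add_subgroup_zsmul)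

lemma zspan_subset: "add_subgroup H \<Longrightarrow> B \<subseteq> H \<Longrightarrow> zspan B \<subseteq> H"
  unfolding zspan_def using zcomb_in_add_subgroup by blast

lemma zcomb_add: "zcomb B m + zcomb B m' = zcomb B (\<lambda>b. m b + m' b)"
  by (simp add: zcomb_def zsmul_add_left sum.distrib)

lemma zcomb_uminus: "- zcomb B m = zcomb B (\<lambda>b. - m b)"
  by (simp add: zcomb_def zsmul_minus_left sum_negf)

lemma zcomb_diff: "zcomb B m - zcomb B m' = zcomb B (\<lambda>b. m b - m' b)"
  by (simp add: zcomb_def zsmul_diff_left sum_subtractf)

lemma zsmul_zcomb: "zsmul k (zcomb B m) = zcomb B (\<lambda>b. k * m b)"
  by (simp add: zcomb_def zsmul_sum_right zsmul_mult)

lemma zcomb_cong: "(\<And>b. b \<in> B \<Longrightarrow> m b = m' b) \<Longrightarrow> zcomb B m = zcomb B m'"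
  by (simp add: zcomb_def)

lemma zcomb_zero [simp]: "zcomb B (\<lambda>_. 0) = 0"
  by (simp add: zcomb_def)

lemma zcomb_indicator:
  assumes "finite B" "s \<in> B"
  shows "zcomb B (\<lambda>b. if b = s then 1 else 0) = s"
proof -
  have "zcomb B (\<lambda>b. if b = s then 1 else 0) = (\<Sum>b\<in>B. if b = s then b else 0)"
    unfolding zcomb_def by (rule sum.cong) auto
  with assms show ?thesis by simp
qed

lemma zcomb_insert: "finite B \<Longrightarrow> a \<notin> B \<Longrightarrow> zcomb (insert a B) m = zsmul (m a) a + zcomb B m"
  by (simp add: zcomb_def)

lemma zspan_mono: "finite C \<Longrightarrow> B \<subseteq> C \<Longrightarrow> zspan B \<subseteq> zspan C"
proof
  fix x assume "finite C" "B \<subseteq> C" "x \<in> zspan B"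
  then obtain m where "x = zcomb B m" by (auto simp: zspan_def)
  also have "\<dots> = zcomb C (\<lambda>b. if b \<in> B then m b else 0)"
    unfolding zcomb_def using \<open>finite C\<close> \<open>B \<subseteq> C\<close> by (intro sum.mono_neutral_cong_left) auto
  finally show "x \<in> zspan C" by (simp add: zspan_def)
qed

lemma add_subgroup_zspan: "add_subgroup (zspan B)"
  unfolding add_subgroup_def zspan_def
  by (auto simp: zcomb_add zcomb_uminus) (metis zcomb_zero rangeI)

lemma zspan_zsmul: "x \<in> zspan B \<Longrightarrow> zsmul k x \<in> zspan B"
  by (rule add_subgroup_zsmul[OF add_subgroup_zspan])

lemma in_zspan: "finite B \<Longrightarrow> s \<in> B \<Longrightarrow> s \<in> zspan B"
  unfolding zspan_def using zcomb_indicator by (metis rangeI)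

lemma zspan_subset_rspan: "zspan B \<subseteq> rspan B"
  unfolding rspan_def by (auto intro: exI[of _ 1])

lemma rspan_zsmul_cancel: "n > 0 \<Longrightarrow> zsmul n x \<in> rspan B \<Longrightarrow> x \<in> rspan B"
  unfolding rspan_def by (auto simp: zsmul_mult[symmetric] intro: mult_pos_pos)

lemma add_subgroup_rspan: "add_subgroup (rspan B)"
  unfolding add_subgroup_def
proof (intro conjI ballI)
  show "0 \<in> rspan B"
    using zspan_subset_rspan add_subgroupD(1)[OF add_subgroup_zspan] by blast
next
  fix x y assume "x \<in> rspan B" "y \<in> rspan B"
  then obtain n n' where n: "n > 0" "zsmul n x \<in> zspan B" and n': "n' > 0" "zsmul n' y \<in> zspan B"
    by (auto simp: rspan_def)
  have "zsmul (n' * n) (x + y) = zsmul n' (zsmul n x) + zsmul n (zsmul n' y)"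
    by (simp add: zsmul_add_right zsmul_mult[symmetric] mult.commute)
  also have "\<dots> \<in> zspan B"
    using n(2) n'(2) zspan_zsmul by (blast intro: add_subgroupD(2)[OF add_subgroup_zspan])
  finally show "x + y \<in> rspan B"
    using n(1) n'(1) unfolding rspan_def by (blast intro: mult_pos_pos)
next
  fix x assume "x \<in> rspan B"
  then show "- x \<in> rspan B"
    unfolding rspan_def using add_subgroupD(3)[OF add_subgroup_zspan] by (auto simp: zsmul_minus_right)
qed

lemma rspan_subset: assumes "C \<subseteq> rspan B" shows "rspan C \<subseteq> rspan B"
proof
  fix x assume "x \<in> rspan C"
  then obtain n where n: "n > 0" "zsmul n x \<in> zspan C" unfolding rspan_def by blast
  then have "zsmul n x \<in> rspan B" using zspan_subset[OF add_subgroup_rspan assms] by blast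
  then show "x \<in> rspan B" by (rule rspan_zsmul_cancel[OF n(1)])
qed

lemma rspan_mono: "finite C \<Longrightarrow> B \<subseteq> C \<Longrightarrow> rspan B \<subseteq> rspan C"
  unfolding rspan_def using zspan_mono by blast

definition additive_on :: "'a::ab_group_add set \<Rightarrow> ('a \<Rightarrow> 'b::ab_group_add) \<Rightarrow> bool" where
  "additive_on H f \<longleftrightarrow> (\<forall>x\<in>H. \<forall>y\<in>H. f (x + y) = f x + f y)"

lemma add_subgroup_UNIV: "add_subgroup UNIV"
  by (simp add: add_subgroup_def)

lemma lie_alg_iff_additive_on: "p \<in> lie_alg \<longleftrightarrow> additive_on UNIV p"
  by (simp add: lie_alg_def additive_on_def)

lemma additive_onD: "additive_on H f \<Longrightarrow> x \<in> H \<Longrightarrow> y \<in> H \<Longrightarrow> f (x + y) = f x + f y"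
  by (simp add: additive_on_def)

lemma additive_on_0: "add_subgroup H \<Longrightarrow> additive_on H f \<Longrightarrow> f 0 = 0"
  using additive_onD[of H f 0 0] add_subgroupD(1) by fastforce

lemma additive_on_uminus:
  assumes "add_subgroup H" "additive_on H f" "x \<in> H"
  shows "f (- x) = - f x"
  using additive_onD[OF assms(2,3) add_subgroupD(3)[OF assms(1,3)]] additive_on_0[OF assms(1,2)]
  by (simp add: add_eq_0_iff2)

lemma additive_on_zsmul:
  assumes "add_subgroup H" "additive_on H f" "x \<in> H"
  shows "f (zsmul k x) = zsmul k (f x)"
proof -
  have "nsmul n x \<in> H \<and> f (nsmul n x) = nsmul n (f x)" for n
    by (induction n)
      (auto simp: additive_on_0[OF assms(1,2)] additive_onD[OF assms(2,3)] add_subgroupD[OF assms(1)] assms(3))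
  then show ?thesis
    using additive_on_uminus[OF assms(1,2)] by (simp add: zsmul_def)
qed

lemma additive_on_sum:
  assumes "add_subgroup H" "additive_on H f" "\<And>b. b \<in> B \<Longrightarrow> g b \<in> H"
  shows "f (sum g B) = (\<Sum>b\<in>B. f (g b))"
  using assms(3)
proof (induction B rule: infinite_finite_induct)
  case (insert b B)
  have "sum g B \<in> H" using add_subgroup_sum[OF assms(1)] insert.prems by blast
  with insert show ?case using additive_onD[OF assms(2)] by simp
qed (simp_all add: additive_on_0[OF assms(1,2)])

lemma additive_on_zcomb:
  assumes "add_subgroup H" "additive_on H f" "B \<subseteq> H"
  shows "f (zcomb B m) = (\<Sum>b\<in>B. zsmul (m b) (f b))"
  unfolding zcomb_def using assms
  by (subst additive_on_sum[OF assms(1,2)])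
    (auto intro!: sum.cong simp: additive_on_zsmul add_subgroup_zsmul subset_iff)

lemma add_subgroup_kernel:
  assumes "add_subgroup H" "additive_on H f"
  shows "add_subgroup {x\<in>H. f x = 0}"
  using assms additive_on_0[OF assms] additive_on_uminus[OF assms]
  by (auto simp: add_subgroup_def additive_on_def)

lemma lie_alg_zcomb: "p \<in> lie_alg \<Longrightarrow> p (zcomb B m) = (\<Sum>b\<in>B. of_int (m b) * p b)"
  by (simp add: lie_alg_iff_additive_on additive_on_zcomb[OF add_subgroup_UNIV] zsmul_eq_mult)

lemma lie_alg_zsmul: "p \<in> lie_alg \<Longrightarrow> p (zsmul k x) = of_int k * p x"
  by (simp add: lie_alg_iff_additive_on additive_on_zsmul[OF add_subgroup_UNIV] zsmul_eq_mult)

section \<open>Rational bases\<close>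

lemma agroup_span_finite_zspan:
  assumes "x \<in> agroup_span A"
  shows "\<exists>B. finite B \<and> B \<subseteq> A \<and> x \<in> zspan B"
proof -
  let ?U = "{x. \<exists>B. finite B \<and> B \<subseteq> A \<and> x \<in> zspan B}"
  have "add_subgroup ?U"
    unfolding add_subgroup_def
  proof (intro conjI ballI)
    show "0 \<in> ?U" using add_subgroupD(1)[OF add_subgroup_zspan, of "{}"] by blast
  next
    fix x y assume "x \<in> ?U" "y \<in> ?U"
    then obtain B B' where B: "finite B" "B \<subseteq> A" "x \<in> zspan B" "finite B'" "B' \<subseteq> A" "y \<in> zspan B'"
      by blast
    then have "x \<in> zspan (B \<union> B')" "y \<in> zspan (B \<union> B')"
      using zspan_mono[of "B \<union> B'"] by auto
    then have "x + y \<in> zspan (B \<union> B')" by (rule add_subgroupD(2)[OF add_subgroup_zspan])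
    with B show "x + y \<in> ?U" by blast
  next
    fix x assume "x \<in> ?U"
    then show "- x \<in> ?U" using add_subgroupD(3)[OF add_subgroup_zspan] by blast
  qed
  moreover have "A \<subseteq> ?U"
  proof
    fix a assume "a \<in> A"
    then show "a \<in> ?U" using in_zspan[of "{a}" a] by blast
  qed
  ultimately show ?thesis using agroup_span_subset assms by blast
qed

lemma finite_subset_agroup_span:
  assumes "finite T" "T \<subseteq> agroup_span A"
  shows "\<exists>B. finite B \<and> B \<subseteq> A \<and> T \<subseteq> zspan B"
proof -
  have "\<forall>x\<in>T. \<exists>B. finite B \<and> B \<subseteq> A \<and> x \<in> zspan B"
    using agroup_span_finite_zspan assms(2) by blast
  then obtain Bx where Bx: "\<And>x. x \<in> T \<Longrightarrow> finite (Bx x) \<and> Bx x \<subseteq> A \<and> x \<in> zspan (Bx x)"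
    by metis
  let ?B = "\<Union>x\<in>T. Bx x"
  have "finite ?B" using assms(1) Bx by blast
  moreover have "T \<subseteq> zspan ?B" using zspan_mono[OF \<open>finite ?B\<close>] Bx by blast
  ultimately show ?thesis using Bx by (intro exI[of _ ?B]) blast
qed

lemma not_indep_insert:
  assumes "indep S" "a \<notin> S" "\<not> indep (insert a S)"
  shows "a \<in> rspan S"
proof -
  have fS: "finite S" using assms(1) by (rule indep_finite)
  obtain m b where m: "zcomb (insert a S) m = 0" "b \<in> insert a S" "m b \<noteq> 0"
    using assms(3) fS by (auto simp: indep_def)
  have eq: "zsmul (m a) a = zcomb S (\<lambda>b. - m b)"
    using m(1) zcomb_uminus[of S m] by (simp add: zcomb_insert[OF fS assms(2)] add_eq_0_iff2)
  have "m a \<noteq> 0"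
  proof
    assume "m a = 0"
    then have "zcomb S (\<lambda>b. - m b) = 0" using eq by simp
    then have "\<forall>b\<in>S. - m b = 0" using assms(1) unfolding indep_def by blast
    with m(2,3) \<open>m a = 0\<close> show False by auto
  qed
  have "zsmul (m a) a \<in> zspan S" unfolding eq zspan_def by blast
  then have "zsmul \<bar>m a\<bar> a \<in> zspan S"
    using add_subgroupD(3)[OF add_subgroup_zspan, of "zsmul (m a) a" S]
    by (cases "m a \<ge> 0") (simp_all add: zsmul_minus_left[symmetric])
  with \<open>m a \<noteq> 0\<close> show ?thesis unfolding rspan_def by (intro CollectI exI[of _ "\<bar>m a\<bar>"]) auto
qed

lemma indep_subset_rspan:
  assumes "finite T"
  shows "\<exists>S\<subseteq>T. indep S \<and> T \<subseteq> rspan S"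
  using assms
proof (induction T rule: finite_induct)
  case empty
  show ?case by (simp add: indep_def)
next
  case (insert a T)
  then obtain S where S: "S \<subseteq> T" "indep S" "T \<subseteq> rspan S" by blast
  have fS: "finite S" using S(2) by (rule indep_finite)
  show ?case
  proof (cases "indep (insert a S)")
    case True
    have "rspan S \<subseteq> rspan (insert a S)" using fS by (intro rspan_mono) auto
    moreover have "a \<in> rspan (insert a S)"
      using in_zspan[of "insert a S" a] fS zspan_subset_rspan[of "insert a S"] by auto
    ultimately show ?thesis using True S by (intro exI[of _ "insert a S"]) auto
  next
    case False
    then have "a \<in> rspan S" using not_indep_insert S insert.hyps(2) by blast
    with S show ?thesis by (intro exI[of _ S]) auto
  qed
qed

lemma exists_rat_basis_subset:
  assumes "finite_rank (UNIV :: 'a::ab_group_add set)" "agroup_span A = (UNIV :: 'a set)"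
  shows "\<exists>S\<subseteq>A. rat_basis S"
proof -
  obtain T :: "'a set" where T: "finite T" "\<And>x. \<exists>n>0. nsmul n x \<in> agroup_span T"
    using assms(1) unfolding finite_rank_def by auto
  obtain B where B: "finite B" "B \<subseteq> A" "T \<subseteq> zspan B"
    using finite_subset_agroup_span[OF T(1), of A] assms(2) by auto
  obtain S where S: "S \<subseteq> B" "indep S" "B \<subseteq> rspan S"
    using indep_subset_rspan[OF B(1)] by blast
  have "T \<subseteq> rspan S" using B(3) zspan_subset[OF add_subgroup_rspan S(3)] by blast
  then have "agroup_span T \<subseteq> rspan S" by (rule agroup_span_subset[OF add_subgroup_rspan])
  have "x \<in> rspan S" for x
  proof -
    obtain n where "n > 0" "nsmul n x \<in> agroup_span T" using T(2) by blast
    with \<open>agroup_span T \<subseteq> rspan S\<close> show ?thesis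
      using rspan_zsmul_cancel[of "int n" x S] by (auto simp: zsmul_of_nat)
  qed
  then have "rat_basis S" unfolding rat_basis_def using S(2) by auto
  with S(1) B(2) show ?thesis by blast
qed

definition basis_coords :: "'a::ab_group_add set \<Rightarrow> 'a \<Rightarrow> int \<times> ('a \<Rightarrow> int)" where
  "basis_coords S x = (SOME nm. fst nm > 0 \<and> zsmul (fst nm) x = zcomb S (snd nm))"

definition lin_ext :: "'a::ab_group_add set \<Rightarrow> ('a \<Rightarrow> real) \<Rightarrow> 'a \<Rightarrow> real" where
  "lin_ext S r x =
     (\<Sum>b\<in>S. of_int (snd (basis_coords S x) b) * r b) / of_int (fst (basis_coords S x))"

lemma basis_coords:
  assumes "rat_basis S"
  shows "fst (basis_coords S x) > 0" "zsmul (fst (basis_coords S x)) x = zcomb S (snd (basis_coords S x))"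
proof -
  have "\<exists>nm. fst nm > 0 \<and> zsmul (fst nm) x = zcomb S (snd nm)"
    using rat_basisD(3)[OF assms, of x] by auto
  from someI_ex[OF this] show "fst (basis_coords S x) > 0"
    "zsmul (fst (basis_coords S x)) x = zcomb S (snd (basis_coords S x))"
    unfolding basis_coords_def by blast+
qed

lemma indep_zcomb_eq:
  assumes "indep S" "zcomb S m = zcomb S m'" "b \<in> S"
  shows "m b = m' b"
proof -
  have "zcomb S (\<lambda>b. m b - m' b) = 0" using assms(2) by (simp add: zcomb_diff[symmetric])
  with assms(1,3) show ?thesis by (auto simp: indep_def)
qed

lemma lin_ext_eq:
  assumes "rat_basis S" "n > 0" "zsmul n x = zcomb S m"
  shows "lin_ext S r x = (\<Sum>b\<in>S. of_int (m b) * r b) / of_int n"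
proof -
  define n' where "n' = fst (basis_coords S x)"
  define m' where "m' = snd (basis_coords S x)"
  have n': "n' > 0" "zsmul n' x = zcomb S m'"
    unfolding n'_def m'_def using basis_coords[OF assms(1)] by auto
  have "zcomb S (\<lambda>b. n * m' b) = zsmul n (zsmul n' x)"
    using n'(2) by (simp add: zsmul_zcomb)
  also have "\<dots> = zsmul n' (zsmul n x)"
    by (simp add: zsmul_mult[symmetric] mult.commute)
  also have "\<dots> = zcomb S (\<lambda>b. n' * m b)"
    using assms(3) by (simp add: zsmul_zcomb)
  finally have "n * m' b = n' * m b" if "b \<in> S" for b
    using indep_zcomb_eq[OF rat_basisD(2)[OF assms(1)] _ that] by blast
  then have "of_int n * (\<Sum>b\<in>S. of_int (m' b) * r b) = of_int n' * (\<Sum>b\<in>S. of_int (m b) * r b)"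
    unfolding sum_distrib_left by (intro sum.cong refl) (metis (no_types) of_int_mult mult.assoc)
  with n'(1) assms(2) show ?thesis
    unfolding lin_ext_def n'_def[symmetric] m'_def[symmetric] by (simp add: field_simps)
qed

lemma lin_ext_in_lie_alg:
  assumes "rat_basis S"
  shows "lin_ext S r \<in> lie_alg"
  unfolding lie_alg_def
proof (intro CollectI allI)
  fix x y
  obtain n m n' m' where n: "n > 0" "zsmul n x = zcomb S m" and n': "n' > 0" "zsmul n' y = zcomb S m'"
    using rat_basisD(3)[OF assms] by meson
  have "zsmul (n * n') (x + y) = zsmul n' (zsmul n x) + zsmul n (zsmul n' y)"
    by (simp only: zsmul_add_right zsmul_mult[symmetric] mult.commute)
  also have "\<dots> = zcomb S (\<lambda>b. n' * m b + n * m' b)"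
    by (simp only: n(2) n'(2) zsmul_zcomb zcomb_add)
  finally have "zsmul (n * n') (x + y) = zcomb S (\<lambda>b. n' * m b + n * m' b)" .
  from lin_ext_eq[OF assms _ this]
  have "lin_ext S r (x + y) = (\<Sum>b\<in>S. of_int (n' * m b + n * m' b) * r b) / of_int (n * n')"
    using n(1) n'(1) by simp
  also have "\<dots> = (\<Sum>b\<in>S. of_int (m b) * r b) / of_int n + (\<Sum>b\<in>S. of_int (m' b) * r b) / of_int n'"
    using n(1) n'(1) by (simp add: field_simps sum.distrib sum_distrib_left sum_divide_distrib)
  also have "\<dots> = lin_ext S r x + lin_ext S r y"
    using lin_ext_eq[OF assms n] lin_ext_eq[OF assms n'] by simp
  finally show "lin_ext S r (x + y) = lin_ext S r x + lin_ext S r y" .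
qed

lemma lin_ext_basis:
  assumes "rat_basis S" "s \<in> S"
  shows "lin_ext S r s = r s"
proof -
  have "zsmul 1 s = zcomb S (\<lambda>b. if b = s then 1 else 0)"
    using zcomb_indicator[OF rat_basisD(1)[OF assms(1)] assms(2)] by simp
  from lin_ext_eq[OF assms(1) _ this]
  have "lin_ext S r s = (\<Sum>b\<in>S. of_int (if b = s then 1 else 0) * r b)" by simp
  also have "\<dots> = (\<Sum>b\<in>S. if b = s then r b else 0)" by (intro sum.cong) auto
  finally show ?thesis using rat_basisD(1)[OF assms(1)] assms(2) by simp
qed

definition dual_coord :: "'a::ab_group_add set \<Rightarrow> 'a \<Rightarrow> 'a \<Rightarrow> real" where
  "dual_coord S s = lin_ext S (\<lambda>b. if b = s then 1 else 0)"

lemma lin_ext_sum: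
  assumes "rat_basis S"
  shows "lin_ext S r x = (\<Sum>s\<in>S. r s * dual_coord S s x)"
proof -
  obtain n m where n: "n > 0" "zsmul n x = zcomb S m" using rat_basisD(3)[OF assms] by blast
  have "dual_coord S s x = of_int (m s) / of_int n" if "s \<in> S" for s
    using lin_ext_eq[OF assms n] rat_basisD(1)[OF assms] that
    by (simp add: dual_coord_def if_distrib cong: if_cong)
  then show ?thesis
    using lin_ext_eq[OF assms n] by (simp add: sum_divide_distrib mult.commute)
qed

lemma lie_alg_eqI:
  assumes "rat_basis S" "p \<in> lie_alg" "q \<in> lie_alg" "\<And>s. s \<in> S \<Longrightarrow> p s = q s"
  shows "p x = q x"
proof -
  obtain n m where n: "n > 0" "zsmul n x = zcomb S m" using rat_basisD(3)[OF assms(1)] by blast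
  have "of_int n * p x = of_int n * q x"
    using arg_cong[OF n(2), of p] arg_cong[OF n(2), of q] assms(2-4)
    by (simp add: lie_alg_zsmul lie_alg_zcomb)
  with n(1) show ?thesis by simp
qed

section \<open>Finitely generated subgroups are free\<close>

lemma additive_int_least_value_dvd:
  fixes c :: "'a::ab_group_add \<Rightarrow> int"
  assumes H: "add_subgroup H" and c: "additive_on H c" and y0: "y0 \<in> H" "c y0 \<noteq> 0"
  shows "\<exists>h\<in>H. c h > 0 \<and> (\<forall>y\<in>H. c h dvd c y)"
proof -
  define P where "P = (\<lambda>n::nat. n > 0 \<and> (\<exists>y\<in>H. c y = int n))"
  have "P (nat \<bar>c y0\<bar>)"
  proof (cases "c y0 > 0")
    case False
    then have "c (- y0) = int (nat \<bar>c y0\<bar>)" using additive_on_uminus[OF H c y0(1)] y0(2) by simp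
    then show ?thesis unfolding P_def using y0 add_subgroupD(3)[OF H y0(1)] by auto
  qed (use y0 in \<open>auto simp: P_def\<close>)
  define k where "k = (LEAST n. P n)"
  have "P k" unfolding k_def by (rule LeastI) fact
  then obtain h where h: "h \<in> H" "c h = int k" "k > 0" unfolding P_def by blast
  have "int k dvd c y" if y: "y \<in> H" for y
  proof -
    define y' where "y' = y - zsmul (c y div int k) h"
    have y'H: "y' \<in> H" unfolding y'_def by (intro add_subgroup_diff[OF H y] add_subgroup_zsmul[OF H h(1)])
    have "c y = c (y' + zsmul (c y div int k) h)" by (simp add: y'_def)
    also have "\<dots> = c y' + c (zsmul (c y div int k) h)"
      by (rule additive_onD[OF c y'H add_subgroup_zsmul[OF H h(1)]])
    finally have cy': "c y' = c y mod int k"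
      using additive_on_zsmul[OF H c h(1)] h(2) by (simp add: zsmul_eq_mult minus_div_mult_eq_mod [symmetric])
    have "c y' = 0"
    proof (rule ccontr)
      assume "c y' \<noteq> 0"
      moreover have bounds: "0 \<le> c y mod int k" "c y mod int k < int k" using h(3) by simp_all
      ultimately have "P (nat (c y'))" using cy' y'H unfolding P_def by auto
      then have "k \<le> nat (c y')" unfolding k_def by (rule Least_le)
      with cy' bounds show False by simp
    qed
    with cy' show ?thesis by (simp add: dvd_eq_mod_eq_0)
  qed
  with h show ?thesis by (intro bexI[of _ h]) auto
qed

lemma indep_insert_transversal:
  fixes c :: "'a::ab_group_add \<Rightarrow> int"
  assumes H: "add_subgroup H" and c: "additive_on H c" and h: "h \<in> H" "c h \<noteq> 0"
    and B: "B \<subseteq> {y\<in>H. c y = 0}" "indep B"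
  shows "indep (insert h B)"
  unfolding indep_def
proof (intro conjI allI impI ballI)
  have fB: "finite B" using B(2) by (rule indep_finite)
  then show "finite (insert h B)" by simp
  fix m b assume m: "zcomb (insert h B) m = 0" and b: "b \<in> insert h B"
  have "h \<notin> B" using B(1) h(2) by auto
  with m fB have e: "zsmul (m h) h + zcomb B m = 0" by (simp add: zcomb_insert)
  have zB: "zcomb B m \<in> H" "c (zcomb B m) = 0"
    using zcomb_in_add_subgroup[OF add_subgroup_kernel[OF H c] B(1)] by auto
  have "m h * c h = c (zsmul (m h) h + zcomb B m)"
    using additive_onD[OF c add_subgroup_zsmul[OF H h(1)] zB(1)] additive_on_zsmul[OF H c h(1)] zB(2)
    by (simp add: zsmul_eq_mult)
  then have "m h * c h = 0" using e additive_on_0[OF H c] by simp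
  with h(2) have mh: "m h = 0" by simp
  with e have "zcomb B m = 0" by simp
  with B(2) mh b show "m b = 0" by (auto simp: indep_def)
qed

lemma zspan_insert_transversal:
  fixes c :: "'a::ab_group_add \<Rightarrow> int"
  assumes H: "add_subgroup H" and c: "additive_on H c" and h: "h \<in> H" "\<forall>y\<in>H. c h dvd c y"
    and B: "finite B" "{y\<in>H. c y = 0} \<subseteq> zspan B"
  shows "H \<subseteq> zspan (insert h B)"
proof
  fix y assume y: "y \<in> H"
  then obtain q where q: "c y = c h * q" using h(2) by blast
  define y' where "y' = y - zsmul q h"
  have y'H: "y' \<in> H" unfolding y'_def by (intro add_subgroup_diff[OF H y] add_subgroup_zsmul[OF H h(1)])
  have "c y = c (y' + zsmul q h)" by (simp add: y'_def)
  also have "\<dots> = c y' + c (zsmul q h)" by (rule additive_onD[OF c y'H add_subgroup_zsmul[OF H h(1)]])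
  finally have "c y' = 0" using q additive_on_zsmul[OF H c h(1)] by (simp add: zsmul_eq_mult)
  with y'H B have "y' \<in> zspan (insert h B)" using zspan_mono[of "insert h B" B] by auto
  moreover have "zsmul q h \<in> zspan (insert h B)"
    using in_zspan[of "insert h B" h] B(1) by (simp add: zspan_zsmul)
  ultimately have "y' + zsmul q h \<in> zspan (insert h B)" by (rule add_subgroupD(2)[OF add_subgroup_zspan])
  then show "y \<in> zspan (insert h B)" by (simp add: y'_def)
qed

lemma free_if_int_coordinates:
  fixes c :: "'i \<Rightarrow> 'a::ab_group_add \<Rightarrow> int"
  assumes "finite I" "add_subgroup H" "\<forall>i\<in>I. additive_on H (c i)" "\<forall>x\<in>H. (\<forall>i\<in>I. c i x = 0) \<longrightarrow> x = 0"
  shows "\<exists>B\<subseteq>H. indep B \<and> H \<subseteq> zspan B"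
  using assms
proof (induction I arbitrary: H rule: finite_induct)
  case empty
  then have "H \<subseteq> {0}" by auto
  then show ?case using add_subgroupD(1)[OF add_subgroup_zspan, of "{}"]
    by (intro exI[of _ "{}"]) (auto simp: indep_def)
next
  case (insert i I)
  let ?K = "{y\<in>H. c i y = 0}"
  have ci: "additive_on H (c i)" using insert.prems(2) by simp
  have "add_subgroup ?K" using add_subgroup_kernel[OF insert.prems(1) ci] .
  moreover have "\<forall>j\<in>I. additive_on ?K (c j)" using insert.prems(2) by (auto simp: additive_on_def)
  moreover have "\<forall>x\<in>?K. (\<forall>j\<in>I. c j x = 0) \<longrightarrow> x = 0" using insert.prems(3) by auto
  ultimately obtain B where B: "B \<subseteq> ?K" "indep B" "?K \<subseteq> zspan B" using insert.IH by meson
  show ?case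
  proof (cases "\<forall>y\<in>H. c i y = 0")
    case True
    then have "?K = H" by auto
    with B show ?thesis by auto
  next
    case False
    then obtain h where h: "h \<in> H" "c i h > 0" "\<forall>y\<in>H. c i h dvd c i y"
      using additive_int_least_value_dvd[OF insert.prems(1) ci] by blast
    have "indep (insert h B)"
      using indep_insert_transversal[OF insert.prems(1) ci h(1) _ B(1,2)] h(2) by simp
    moreover have "H \<subseteq> zspan (insert h B)"
      using zspan_insert_transversal[OF insert.prems(1) ci h(1,3) indep_finite[OF B(2)] B(3)] .
    moreover have "insert h B \<subseteq> H" using h(1) B(1) by auto
    ultimately show ?thesis by blast
  qed
qed

lemma torsion_free_zsmul_eq_0:
  assumes "torsion_free (UNIV :: 'a::ab_group_add set)" "N > 0" "zsmul N (x::'a) = 0"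
  shows "x = 0"
proof -
  have "nsmul (nat N) x = 0" "nat N > 0" using assms(2,3) by (simp_all add: zsmul_def)
  with assms(1) show ?thesis unfolding torsion_free_def by blast
qed

lemma rspan_common_multiple:
  assumes "finite U" "U \<subseteq> rspan S"
  shows "\<exists>N>0. \<forall>u\<in>U. zsmul N u \<in> zspan S"
  using assms
proof (induction U rule: finite_induct)
  case empty
  show ?case by (intro exI[of _ 1]) auto
next
  case (insert u U)
  then obtain N where N: "N > 0" "\<forall>v\<in>U. zsmul N v \<in> zspan S" by auto
  obtain n where n: "n > 0" "zsmul n u \<in> zspan S" using insert.prems unfolding rspan_def by blast
  have "zsmul (n * N) v \<in> zspan S" if "v \<in> insert u U" for v
  proof (cases "v = u")
    case True
    then show ?thesis using zspan_zsmul[OF n(2), of N] by (simp add: zsmul_mult[symmetric] mult.commute)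
  next
    case False
    then show ?thesis using that N(2) zspan_zsmul[of "zsmul N v" S n] by (simp add: zsmul_mult)
  qed
  with N(1) n(1) show ?case by (intro exI[of _ "n * N"]) simp
qed

lemma free_if_multiple_in_zspan:
  assumes tf: "torsion_free (UNIV :: 'a::ab_group_add set)" and S: "indep S"
    and Y: "add_subgroup Y" and N: "N > 0" "\<forall>y\<in>Y. zsmul N (y::'a) \<in> zspan S"
  shows "\<exists>B\<subseteq>Y. indep B \<and> Y \<subseteq> zspan B"
proof -
  define coeff where "coeff = (\<lambda>y. SOME m. zsmul N y = zcomb S m)"
  have coeff: "zsmul N y = zcomb S (coeff y)" if "y \<in> Y" for y
  proof -
    have "\<exists>m. zsmul N y = zcomb S m" using N(2) that unfolding zspan_def by blast
    then show ?thesis unfolding coeff_def by (rule someI_ex)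
  qed
  show ?thesis
  proof (rule free_if_int_coordinates[OF indep_finite[OF S] Y, of "\<lambda>b y. coeff y b"])
    show "\<forall>b\<in>S. additive_on Y (\<lambda>y. coeff y b)"
      unfolding additive_on_def
    proof (intro ballI)
      fix b x y assume "b \<in> S" "x \<in> Y" "y \<in> Y"
      then have "zcomb S (coeff (x + y)) = zsmul N (x + y)"
        using coeff add_subgroupD(2)[OF Y] by simp
      also have "\<dots> = zcomb S (coeff x) + zcomb S (coeff y)"
        using coeff \<open>x \<in> Y\<close> \<open>y \<in> Y\<close> by (simp add: zsmul_add_right)
      finally have "zcomb S (coeff (x + y)) = zcomb S (\<lambda>b. coeff x b + coeff y b)"
        by (simp add: zcomb_add)
      then show "coeff (x + y) b = coeff x b + coeff y b" by (rule indep_zcomb_eq[OF S _ \<open>b \<in> S\<close>])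
    qed
    show "\<forall>x\<in>Y. (\<forall>b\<in>S. coeff x b = 0) \<longrightarrow> x = 0"
    proof (intro ballI impI)
      fix x assume "x \<in> Y" "\<forall>b\<in>S. coeff x b = 0"
      then have "zsmul N x = 0" using coeff zcomb_cong[of S "coeff x" "\<lambda>_. 0"] by simp
      then show "x = 0" by (rule torsion_free_zsmul_eq_0[OF tf N(1)])
    qed
  qed
qed

lemma exists_rat_basis_covering:
  assumes tf: "torsion_free (UNIV :: 'a::ab_group_add set)"
    and S: "rat_basis (S :: 'a set)" and T: "finite (T :: 'a set)"
  shows "\<exists>B. rat_basis B \<and> T \<subseteq> zspan B"
proof -
  have fTS: "finite (T \<union> S)" using T rat_basisD(1)[OF S] by simp
  obtain N where N: "N > 0" "\<forall>u\<in>T \<union> S. zsmul N u \<in> zspan S"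
    using rspan_common_multiple[OF fTS, of S] S by (auto simp: rat_basis_def)
  have "add_subgroup {y. zsmul N y \<in> zspan S}"
    using add_subgroupD[OF add_subgroup_zspan[of S]] by (auto simp: add_subgroup_def zsmul_add_right zsmul_minus_right)
  then have "\<forall>y\<in>zspan (T \<union> S). zsmul N y \<in> zspan S" using zspan_subset N(2) by blast
  then obtain B where B: "indep B" "zspan (T \<union> S) \<subseteq> zspan B"
    using free_if_multiple_in_zspan[OF tf rat_basisD(2)[OF S] add_subgroup_zspan N(1)] by blast
  have TS: "T \<union> S \<subseteq> zspan B" using B(2) in_zspan[OF fTS] by blast
  then have "rspan S \<subseteq> rspan B" using zspan_subset_rspan rspan_subset by blast
  with S B(1) TS show ?thesis unfolding rat_basis_def by blast
qed

definition circle_lift :: "complex \<Rightarrow> real" where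
  "circle_lift z = Arg z / (2 * pi)"

lemma cis_circle_lift: "norm z = 1 \<Longrightarrow> cis (2 * pi * circle_lift z) = z"
  using cis_Arg[of z] by (cases "z = 0") (auto simp: circle_lift_def sgn_div_norm)

lemma abs_circle_lift_le: "\<bar>circle_lift z\<bar> \<le> 1/2"
  unfolding circle_lift_def using Arg_bounded[of z] by (auto simp: abs_le_iff field_simps)

lemma cis_eq_imp_diff_Ints:
  assumes "cis (2 * pi * a) = cis (2 * pi * b)"
  shows "a - b \<in> \<int>"
proof -
  from assms obtain n :: int where
    "\<i> * complex_of_real (2 * pi * a) = \<i> * complex_of_real (2 * pi * b) + (of_int (2 * n) * pi) * \<i>"
    by (auto simp: cis_conv_exp exp_eq)
  then have "2 * pi * (a - b - of_int n) = 0"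
    by (auto simp: complex_eq_iff algebra_simps)
  then show ?thesis by simp
qed

lemma delta_circ_eq_abs_circle_lift:
  assumes "norm z = 1"
  shows "delta_circ z = \<bar>circle_lift z\<bar>"
  unfolding delta_circ_def
proof (rule cInf_eq_minimum)
  show "\<bar>circle_lift z\<bar> \<in> {\<bar>t\<bar> |t. cis (2 * pi * t) = z}" using cis_circle_lift[OF assms] by blast
next
  fix x assume "x \<in> {\<bar>t\<bar> |t. cis (2 * pi * t) = z}"
  then obtain t where t: "x = \<bar>t\<bar>" "cis (2 * pi * t) = z" by blast
  then have "t - circle_lift z \<in> \<int>" using cis_eq_imp_diff_Ints cis_circle_lift[OF assms] by simp
  then have "t = circle_lift z \<or> \<bar>t - circle_lift z\<bar> \<ge> 1"
    using Ints_nonzero_abs_ge1 by fastforce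
  with t(1) abs_circle_lift_le[of z] show "\<bar>circle_lift z\<bar> \<le> x" by linarith
qed

lemma Re_gt_half_if_near_1:
  assumes "norm (w::complex) = 1" "norm (w - 1) < 1"
  shows "Re w > 1/2"
proof -
  have "(Re w)\<^sup>2 + (Im w)\<^sup>2 = 1" using assms(1) cmod_power2[of w] by simp
  moreover have "(norm (w - 1))\<^sup>2 < 1" using assms(2) by (simp add: power_less_one_iff)
  then have "(Re w - 1)\<^sup>2 + (Im w)\<^sup>2 < 1" using cmod_power2[of "w - 1"] by simp
  ultimately show ?thesis by (simp add: power2_eq_square algebra_simps)
qed

text \<open>If all powers of \<open>z \<noteq> 1\<close> stayed in the ball, the partial sums \<open>\<Sum>i<N. z\<^sup>i\<close> would have
  real part at least \<open>N/2\<close> while staying bounded by \<open>2 / \<bar>1 - z\<bar>\<close>.\<close>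

lemma circle_no_small_subgroup:
  assumes "norm (z::complex) = 1" "\<And>n. norm (z ^ n - 1) < 1"
  shows "z = 1"
proof (rule ccontr)
  assume "z \<noteq> 1"
  define d where "d = norm (1 - z)"
  have d: "d > 0" using \<open>z \<noteq> 1\<close> unfolding d_def by simp
  obtain N :: nat where N: "real N > 4 / d" using reals_Archimedean2 by blast
  have "norm (1 - z ^ N) \<le> norm (1::complex) + norm (z ^ N)" by (rule norm_triangle_ineq4)
  also have "\<dots> = 2" using assms(1) by (simp add: norm_power)
  finally have "norm (\<Sum>i<N. z ^ i) \<le> 2 / d"
    using \<open>z \<noteq> 1\<close> by (simp add: sum_gp_strict norm_divide d_def divide_right_mono)
  moreover have "real N / 2 \<le> Re (\<Sum>i<N. z ^ i)"
  proof -
    have "1/2 \<le> Re (z ^ i)" for i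
      using Re_gt_half_if_near_1[of "z ^ i"] assms by (simp add: norm_power less_imp_le)
    then have "(\<Sum>i<N. 1/2) \<le> (\<Sum>i<N. Re (z ^ i))" by (intro sum_mono)
    then show ?thesis by (simp add: Re_sum)
  qed
  moreover have "Re (\<Sum>i<N. z ^ i) \<le> norm (\<Sum>i<N. z ^ i)" by (rule complex_Re_le_cmod)
  ultimately have "real N \<le> 4 / d" by (simp add: field_simps)
  with N show False by simp
qed

lemma cis_sum: "(\<Prod>b\<in>B. cis (f b)) = cis (sum f B)"
  by (induction B rule: infinite_finite_induct) (auto simp: cis_mult)

lemma dual_groupD:
  assumes "g \<in> dual_group"
  shows "norm (g x) = 1" "g (x + y) = g x * g y"
  using assms by (auto simp: dual_group_def)

lemma dual_group_nonzero: "g \<in> dual_group \<Longrightarrow> g x \<noteq> 0"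
  using dual_groupD(1)[of g x] by auto

lemma dual_group_0: "g \<in> dual_group \<Longrightarrow> g 0 = 1"
  using dual_groupD(2)[of g 0 0] dual_group_nonzero[of g 0] by simp

lemma dual_group_uminus: "g \<in> dual_group \<Longrightarrow> g (- x) = inverse (g x)"
  using dual_groupD(2)[of g x "- x"] dual_group_0[of g] dual_group_nonzero[of g x]
  by (simp add: field_simps)

lemma dual_group_cis_zsmul:
  assumes "g \<in> dual_group" "g x = cis (2 * pi * t)"
  shows "g (zsmul k x) = cis (2 * pi * (of_int k * t))"
proof -
  have nsmul: "g (nsmul n x) = cis (2 * pi * t) ^ n" for n
    using assms by (induction n) (auto simp: dual_group_0 dual_groupD(2))
  show ?thesis
  proof (cases "0 \<le> k")
    case True
    then show ?thesis by (simp add: zsmul_def nsmul Complex.DeMoivre mult_ac)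
  next
    case False
    then have "g (zsmul k x) = inverse (cis (2 * pi * t) ^ nat (- k))"
      using assms(1) by (simp add: zsmul_def dual_group_uminus nsmul)
    with False show ?thesis by (simp add: Complex.DeMoivre mult_ac)
  qed
qed

lemma dual_group_sum: "g \<in> dual_group \<Longrightarrow> g (sum f B) = (\<Prod>b\<in>B. g (f b))"
  by (induction B rule: infinite_finite_induct) (auto simp: dual_group_0 dual_groupD(2))

lemma dual_group_zcomb:
  assumes "g \<in> dual_group" "\<And>b. b \<in> B \<Longrightarrow> g b = cis (2 * pi * r b)"
  shows "g (zcomb B m) = cis (2 * pi * (\<Sum>b\<in>B. of_int (m b) * r b))"
  unfolding zcomb_def dual_group_sum[OF assms(1)]
  using dual_group_cis_zsmul[OF assms(1) assms(2)] by (simp add: cis_sum sum_distrib_left)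

lemma expG_in_dual_group: "p \<in> lie_alg \<Longrightarrow> expG p \<in> dual_group"
  by (auto simp: dual_group_def expG_def lie_alg_def distrib_left cis_mult)

lemma dual_group_mult: "g \<in> dual_group \<Longrightarrow> h \<in> dual_group \<Longrightarrow> (\<lambda>c. g c * h c) \<in> dual_group"
  by (auto simp: dual_group_def norm_mult)

lemma dual_group_one: "(\<lambda>c. 1) \<in> dual_group"
  by (auto simp: dual_group_def)

lemma dual_group_cnj: "g \<in> dual_group \<Longrightarrow> (\<lambda>c. cnj (g c)) \<in> dual_group"
  by (auto simp: dual_group_def)

lemma dual_group_power: "g \<in> dual_group \<Longrightarrow> (\<lambda>c. g c ^ n) \<in> dual_group"
  by (auto simp: dual_group_def norm_power power_mult_distrib)

lemma dual_group_prod: "(\<And>s. s \<in> S \<Longrightarrow> F s \<in> dual_group) \<Longrightarrow> (\<lambda>c. \<Prod>s\<in>S. F s c) \<in> dual_group"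
  by (induction S rule: infinite_finite_induct) (auto simp: dual_group_one dual_group_mult)

lemma dual_group_cnj_mult: "g \<in> dual_group \<Longrightarrow> cnj (g x) * g x = 1"
  using dual_groupD(1)[of g x] complex_norm_square[of "g x"] by (simp add: mult.commute)

lemma dual_group_eqI:
  assumes "g \<in> dual_group" "h \<in> dual_group" "\<And>a. a \<in> A \<Longrightarrow> g a = h a" "agroup_span A = UNIV"
  shows "g = h"
proof -
  have "add_subgroup {x. g x = h x}"
    using assms(1,2) by (auto simp: add_subgroup_def dual_group_0 dual_groupD(2) dual_group_uminus)
  then have "agroup_span A \<subseteq> {x. g x = h x}" using agroup_span_subset assms(3) by blast
  with assms(4) show ?thesis by auto
qed

lemma dual_group_separates_points:
  assumes tf: "torsion_free (UNIV :: 'a::ab_group_add set)" and fr: "finite_rank (UNIV :: 'a set)"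
    and "(x::'a) \<noteq> 0"
  shows "\<exists>g\<in>dual_group. g x \<noteq> 1"
proof -
  obtain S :: "'a set" where S: "rat_basis S"
    using exists_rat_basis_subset[OF fr, of UNIV] by (auto intro: agroup_span.gen)
  obtain n m where n: "n > 0" "zsmul n x = zcomb S m" using rat_basisD(3)[OF S] by blast
  obtain b0 where b0: "b0 \<in> S" "m b0 \<noteq> 0"
  proof (rule ccontr)
    assume "\<not> thesis"
    then have "zcomb S m = 0" using that zcomb_cong[of S m "\<lambda>_. 0"] by auto
    with n torsion_free_zsmul_eq_0[OF tf] \<open>x \<noteq> 0\<close> show False by metis
  qed
  define p where "p = lin_ext S (\<lambda>b. if b = b0 then of_int n / (2 * of_int (m b0)) else 0)"
  have "p x = (\<Sum>b\<in>S. if b = b0 then of_int (m b) * (of_int n / (2 * of_int (m b0))) else 0) / of_int n"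
    unfolding p_def lin_ext_eq[OF S n] by (simp add: if_distrib cong: if_cong)
  also have "\<dots> = 1/2" using rat_basisD(1)[OF S] b0 n(1) by simp
  finally have px: "p x = 1/2" .
  have "expG p x = -1" unfolding expG_def px by simp
  moreover have "expG p \<in> dual_group" unfolding p_def by (rule expG_in_dual_group[OF lin_ext_in_lie_alg[OF S]])
  ultimately show ?thesis by (intro bexI[of _ "expG p"]) simp_all
qed

lemma dual_group_eval_inj:
  assumes tf: "torsion_free (UNIV :: 'a::ab_group_add set)" and fr: "finite_rank (UNIV :: 'a set)"
    and "\<And>g. g \<in> dual_group \<Longrightarrow> g (y::'a) = g y'"
  shows "y = y'"
proof (rule ccontr)
  assume "y \<noteq> y'"
  then obtain g where g: "g \<in> dual_group" "g (y - y') \<noteq> 1"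
    using dual_group_separates_points[OF tf fr, of "y - y'"] by auto
  have "g (y - y') = g y * inverse (g y')"
    using dual_groupD(2)[OF g(1), of y "- y'"] dual_group_uminus[OF g(1)] by simp
  with g assms(3)[OF g(1)] dual_group_nonzero[OF g(1)] show False by simp
qed

section \<open>Continuous characters of the real line\<close>

lemma continuous_exp_eq_1_constant:
  fixes D :: "'a::topological_space \<Rightarrow> complex"
  assumes "connected S" "continuous_on S D" "\<And>x. x \<in> S \<Longrightarrow> exp (D x) = 1"
  shows "D constant_on S"
proof (rule continuous_discrete_range_constant[OF assms(1,2)])
  fix x assume "x \<in> S"
  show "\<exists>e>0. \<forall>y. y \<in> S \<and> D y \<noteq> D x \<longrightarrow> e \<le> norm (D y - D x)"
  proof (intro exI[of _ "2 * pi"] conjI allI impI)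
    fix y assume "y \<in> S \<and> D y \<noteq> D x"
    with \<open>x \<in> S\<close> assms(3) show "2 * pi \<le> norm (D y - D x)"
      using exp_complex_eqI[of "D y" "D x"] abs_Im_le_cmod[of "D y - D x"] by force
  qed simp
qed

lemma continuous_additive_eq_0_if_period_1:
  fixes u :: "real \<Rightarrow> complex"
  assumes add: "\<And>s t. u (s + t) = u s + u t" and cont: "continuous_on UNIV u" and "u 1 = 0"
  shows "u t = 0"
proof -
  have u: "additive_on UNIV u" using add by (simp add: additive_on_def)
  have u_mult: "u (of_int m * s) = of_int m * u s" for m s
    using additive_on_zsmul[OF add_subgroup_UNIV u, of s m] by (simp add: zsmul_eq_mult)
  have u_frac: "u s = u (frac s)" for s
    using add[of "frac s" "of_int \<lfloor>s\<rfloor>"] u_mult[of "\<lfloor>s\<rfloor>" 1] \<open>u 1 = 0\<close> by (simp add: frac_def)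
  have "compact (u ` {0..1})"
    by (rule compact_continuous_image) (auto intro: continuous_on_subset[OF cont])
  then obtain a where a: "\<And>s. s \<in> {0..1} \<Longrightarrow> norm (u s) \<le> a"
    using compact_imp_bounded[of "u ` {0..1}"] unfolding bounded_iff by blast
  have bounded: "norm (u s) \<le> a" for s
    using a[of "frac s"] u_frac[of s] frac_lt_1[of s] by simp
  show "u t = 0"
  proof (rule ccontr)
    assume "u t \<noteq> 0"
    obtain n :: nat where n: "real n > a / norm (u t)" using reals_Archimedean2 by blast
    have "norm (u (of_int (int n) * t)) = real n * norm (u t)"
      using u_mult[of "int n" t] by (simp add: norm_mult)
    also have "\<dots> > a" using n \<open>u t \<noteq> 0\<close> by (simp add: field_simps)
    finally show False using bounded[of "of_int (int n) * t"] by simp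
  qed
qed

lemma continuous_character_real_line:
  fixes \<phi> :: "real \<Rightarrow> complex"
  assumes cont: "continuous_on UNIV \<phi>" and hom: "\<And>s t. \<phi> (s + t) = \<phi> s * \<phi> t"
    and nz: "\<And>t. \<phi> t \<noteq> 0" and "\<phi> 1 = 1"
  shows "\<exists>k::int. \<forall>t. \<phi> t = cis (2 * pi * (of_int k * t))"
proof -
  from continuous_logarithm_on_contractible[OF cont contractible_UNIV] nz
  obtain g where g: "continuous_on UNIV g" "\<And>t. \<phi> t = exp (g t)" by auto
  define h where "h t = g t - g 0" for t
  have "\<phi> 0 = 1" using hom[of 0 0] nz[of 0] by simp
  then have \<phi>_h: "\<phi> t = exp (h t)" for t unfolding h_def using g(2) by (simp add: exp_diff)
  define D where "D p = g (fst p + snd p) - g (fst p) - g (snd p)" for p :: "real \<times> real"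
  have "D constant_on UNIV"
  proof (rule continuous_exp_eq_1_constant[OF connected_UNIV])
    show "continuous_on UNIV D"
      unfolding D_def by (intro continuous_intros continuous_on_compose2[OF g(1)]) auto
    show "exp (D p) = 1" for p
      using hom nz by (simp add: D_def exp_diff g(2)[symmetric])
  qed
  then have "D (s, t) = D (0, 0)" for s t by (simp add: constant_on_def) metis
  then have h_add: "h (s + t) = h s + h t" for s t
    by (simp add: D_def h_def algebra_simps)
  obtain k :: int where "Re (h 1) = 0" "Im (h 1) = of_int (2 * k) * pi"
    using \<phi>_h[of 1] \<open>\<phi> 1 = 1\<close> exp_eq_1 by metis
  then have h1: "h 1 = of_real (2 * pi * of_int k) * \<i>" by (simp add: complex_eq_iff)
  define u where "u t = h t - of_real t * h 1" for t
  have "u t = 0" for t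
  proof (rule continuous_additive_eq_0_if_period_1)
    show "u (s + t) = u s + u t" for s t using h_add by (simp add: u_def algebra_simps)
    show "continuous_on UNIV u" unfolding u_def h_def by (intro continuous_intros g(1))
  qed (simp add: u_def)
  then have "\<phi> t = cis (2 * pi * (of_int k * t))" for t
    unfolding \<phi>_h cis_conv_exp using h1 by (simp add: u_def algebra_simps)
  then show ?thesis by blast
qed

section \<open>Continuous characters of \<open>G\<close> are evaluations\<close>

lemma character_one:
  fixes ch :: "('a::ab_group_add \<Rightarrow> complex) \<Rightarrow> complex"
  assumes mult: "\<And>g h. g \<in> dual_group \<Longrightarrow> h \<in> dual_group \<Longrightarrow> ch (\<lambda>c. g c * h c) = ch g * ch h"
    and nrm: "\<And>g. g \<in> dual_group \<Longrightarrow> norm (ch g) = 1"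
  shows "ch (\<lambda>c. 1) = 1"
proof -
  have "ch (\<lambda>c. 1) \<noteq> 0" using nrm[OF dual_group_one] by auto
  with mult[OF dual_group_one dual_group_one] show ?thesis by (metis mult_cancel_left1)
qed

lemma character_prod:
  fixes ch :: "('a::ab_group_add \<Rightarrow> complex) \<Rightarrow> complex"
  assumes mult: "\<And>g h. g \<in> dual_group \<Longrightarrow> h \<in> dual_group \<Longrightarrow> ch (\<lambda>c. g c * h c) = ch g * ch h"
    and one: "ch (\<lambda>c. 1) = 1" and F: "\<And>s. s \<in> S \<Longrightarrow> F s \<in> dual_group"
  shows "ch (\<lambda>c. \<Prod>s\<in>S. F s c) = (\<Prod>s\<in>S. ch (F s))"
  using F
proof (induction S rule: infinite_finite_induct)
  case (insert a A)
  then have "ch (\<lambda>c. F a c * (\<Prod>s\<in>A. F s c)) = ch (F a) * ch (\<lambda>c. \<Prod>s\<in>A. F s c)"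
    by (intro mult dual_group_prod) auto
  with insert show ?case by simp
qed (simp_all add: one)

lemma continuous_character_near_1:
  fixes ch :: "('a::ab_group_add \<Rightarrow> complex) \<Rightarrow> complex"
  assumes cont: "continuous_on dual_group ch" and one: "ch (\<lambda>c. 1) = 1"
  shows "\<exists>T. finite T \<and> (\<forall>h\<in>dual_group. (\<forall>t\<in>T. h t = 1) \<longrightarrow> norm (ch h - 1) < 1)"
proof -
  obtain U where U: "open U" "U \<inter> dual_group = ch -` ball 1 1 \<inter> dual_group"
    using cont unfolding continuous_on_open_invariant by (meson open_ball)
  have one_U: "(\<lambda>c. 1) \<in> U" using U(2) one dual_group_one by auto
  have "openin (product_topology (\<lambda>i. euclidean) UNIV) U" using U(1) by (simp add: open_fun_def)
  from product_topology_open_contains_basis[OF this one_U]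
  obtain X where X: "(\<lambda>c. 1) \<in> (\<Pi>\<^sub>E i\<in>UNIV. X i)" "finite {i. X i \<noteq> UNIV}"
      "(\<Pi>\<^sub>E i\<in>UNIV. X i) \<subseteq> U"
    by auto
  define T where "T = {i. X i \<noteq> UNIV}"
  have "norm (ch h - 1) < 1" if h: "h \<in> dual_group" "\<forall>t\<in>T. h t = 1" for h
  proof -
    have "h i \<in> X i" for i
    proof (cases "i \<in> T")
      case True
      then show ?thesis using h(2) X(1) by (simp add: PiE_UNIV_domain Pi_iff)
    qed (simp add: T_def)
    then have "h \<in> U \<inter> dual_group" using X(3) h(1) by (auto simp: PiE_UNIV_domain)
    then show ?thesis using U(2) by (simp add: dist_norm norm_minus_commute)
  qed
  moreover have "finite T" using X(2) by (simp add: T_def)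
  ultimately show ?thesis by blast
qed

lemma continuous_character_kernel:
  fixes ch :: "('a::ab_group_add \<Rightarrow> complex) \<Rightarrow> complex"
  assumes cont: "continuous_on dual_group ch"
    and mult: "\<And>g h. g \<in> dual_group \<Longrightarrow> h \<in> dual_group \<Longrightarrow> ch (\<lambda>c. g c * h c) = ch g * ch h"
    and nrm: "\<And>g. g \<in> dual_group \<Longrightarrow> norm (ch g) = 1"
  shows "\<exists>T. finite T \<and> (\<forall>h\<in>dual_group. (\<forall>t\<in>T. h t = 1) \<longrightarrow> ch h = 1)"
proof -
  have one: "ch (\<lambda>c. 1) = 1" by (rule character_one[OF mult nrm])
  obtain T where T: "finite T" "\<And>h. h \<in> dual_group \<Longrightarrow> \<forall>t\<in>T. h t = 1 \<Longrightarrow> norm (ch h - 1) < 1"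
    using continuous_character_near_1[OF cont one] by blast
  have "ch h = 1" if h: "h \<in> dual_group" "\<forall>t\<in>T. h t = 1" for h
  proof (rule circle_no_small_subgroup[OF nrm[OF h(1)]])
    fix n :: nat
    have "ch (\<lambda>c. \<Prod>i<n. h c) = (\<Prod>i<n. ch h)" by (rule character_prod[OF mult one h(1)])
    then have "ch (\<lambda>c. h c ^ n) = ch h ^ n" by simp
    moreover have "norm (ch (\<lambda>c. h c ^ n) - 1) < 1" using T(2)[OF dual_group_power[OF h(1)]] h(2) by simp
    ultimately show "norm (ch h ^ n - 1) < 1" by simp
  qed
  with T(1) show ?thesis by blast
qed

lemma continuous_character_along_line:
  fixes ch :: "('a::ab_group_add \<Rightarrow> complex) \<Rightarrow> complex"
  assumes cont: "continuous_on dual_group ch"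
    and mult: "\<And>g h. g \<in> dual_group \<Longrightarrow> h \<in> dual_group \<Longrightarrow> ch (\<lambda>c. g c * h c) = ch g * ch h"
    and nrm: "\<And>g. g \<in> dual_group \<Longrightarrow> norm (ch g) = 1"
    and p: "p \<in> lie_alg" and "ch (expG p) = 1"
  shows "\<exists>k::int. \<forall>t. ch (expG (\<lambda>c. t * p c)) = cis (2 * pi * (of_int k * t))"
proof (rule continuous_character_real_line)
  have tp: "(\<lambda>c. t * p c) \<in> lie_alg" for t
    using p by (simp add: lie_alg_def algebra_simps)
  have "continuous_on UNIV (\<lambda>t. expG (\<lambda>c. t * p c))"
    unfolding expG_def cis_conv_exp by (intro continuous_on_coordinatewise_then_product continuous_intros)
  then show "continuous_on UNIV (\<lambda>t. ch (expG (\<lambda>c. t * p c)))"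
    by (rule continuous_on_compose2[OF cont]) (use expG_in_dual_group[OF tp] in blast)
  show "ch (expG (\<lambda>c. (s + t) * p c)) = ch (expG (\<lambda>c. s * p c)) * ch (expG (\<lambda>c. t * p c))" for s t
    using mult[OF expG_in_dual_group[OF tp] expG_in_dual_group[OF tp]]
    by (simp add: expG_def ring_distribs cis_mult)
  show "ch (expG (\<lambda>c. t * p c)) \<noteq> 0" for t
    using nrm[OF expG_in_dual_group[OF tp[of t]]] by auto
qed (simp add: \<open>ch (expG p) = 1\<close>)

lemma continuous_character_trivial_on_rat_basis:
  fixes ch :: "('a::ab_group_add \<Rightarrow> complex) \<Rightarrow> complex"
  assumes tf: "torsion_free (UNIV :: 'a set)" and fr: "finite_rank (UNIV :: 'a set)"
    and cont: "continuous_on dual_group ch"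
    and mult: "\<And>g h. g \<in> dual_group \<Longrightarrow> h \<in> dual_group \<Longrightarrow> ch (\<lambda>c. g c * h c) = ch g * ch h"
    and nrm: "\<And>g. g \<in> dual_group \<Longrightarrow> norm (ch g) = 1"
  shows "\<exists>S. rat_basis S \<and> (\<forall>h\<in>dual_group. (\<forall>s\<in>S. h s = 1) \<longrightarrow> ch h = 1)"
proof -
  obtain T where T: "finite T" "\<And>h. h \<in> dual_group \<Longrightarrow> \<forall>t\<in>T. h t = 1 \<Longrightarrow> ch h = 1"
    using continuous_character_kernel[OF cont mult nrm] by blast
  obtain S0 :: "'a set" where "rat_basis S0"
    using exists_rat_basis_subset[OF fr, of UNIV] by (auto intro: agroup_span.gen)
  then obtain S where S: "rat_basis S" "T \<subseteq> zspan S"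
    using exists_rat_basis_covering[OF tf _ T(1)] by blast
  have "ch h = 1" if h: "h \<in> dual_group" "\<forall>s\<in>S. h s = 1" for h
  proof (rule T(2)[OF h(1)], intro ballI)
    fix t assume "t \<in> T"
    then obtain m where "t = zcomb S m" using S(2) unfolding zspan_def by blast
    then show "h t = 1" using dual_group_zcomb[OF h(1), of S "\<lambda>_. 0" m] h(2) by simp
  qed
  with S(1) show ?thesis by blast
qed

lemma continuous_character_is_evaluation:
  fixes ch :: "('a::ab_group_add \<Rightarrow> complex) \<Rightarrow> complex"
  assumes tf: "torsion_free (UNIV :: 'a set)" and fr: "finite_rank (UNIV :: 'a set)"
    and cont: "continuous_on dual_group ch"
    and mult: "\<And>g h. g \<in> dual_group \<Longrightarrow> h \<in> dual_group \<Longrightarrow> ch (\<lambda>c. g c * h c) = ch g * ch h"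
    and nrm: "\<And>g. g \<in> dual_group \<Longrightarrow> norm (ch g) = 1"
  shows "\<exists>y. \<forall>g\<in>dual_group. g y = ch g"
proof -
  obtain S where S: "rat_basis S" and kernel: "\<And>h. h \<in> dual_group \<Longrightarrow> \<forall>s\<in>S. h s = 1 \<Longrightarrow> ch h = 1"
    using continuous_character_trivial_on_rat_basis[OF tf fr cont mult nrm] by blast
  have e: "dual_coord S s \<in> lie_alg" for s unfolding dual_coord_def by (rule lin_ext_in_lie_alg[OF S])
  have line: "expG (\<lambda>c. t * dual_coord S s c) \<in> dual_group" for s t
    using e[of s] by (intro expG_in_dual_group) (simp add: lie_alg_def algebra_simps)
  have "\<exists>k::int. \<forall>t. ch (expG (\<lambda>c. t * dual_coord S s c)) = cis (2 * pi * (of_int k * t))" for s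
  proof (rule continuous_character_along_line[OF cont mult nrm e])
    show "ch (expG (dual_coord S s)) = 1"
      by (rule kernel[OF expG_in_dual_group[OF e]]) (simp add: expG_def dual_coord_def lin_ext_basis[OF S])
  qed
  then obtain k :: "'a \<Rightarrow> int"
    where k: "\<And>s t. ch (expG (\<lambda>c. t * dual_coord S s c)) = cis (2 * pi * (of_int (k s) * t))"
    by metis
  have "g (zcomb S k) = ch g" if g: "g \<in> dual_group" for g
  proof -
    define r where "r s = circle_lift (g s)" for s
    have g_r: "g s = cis (2 * pi * r s)" for s unfolding r_def using cis_circle_lift[OF dual_groupD(1)[OF g]] by simp
    define E where "E = expG (lin_ext S r)"
    have E: "E \<in> dual_group" unfolding E_def by (rule expG_in_dual_group[OF lin_ext_in_lie_alg[OF S]])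
    define h where "h c = g c * cnj (E c)" for c
    have h: "h \<in> dual_group" unfolding h_def by (rule dual_group_mult[OF g dual_group_cnj[OF E]])
    have "E s = g s" if "s \<in> S" for s using that lin_ext_basis[OF S] g_r by (simp add: E_def expG_def)
    then have "ch h = 1" using dual_group_cnj_mult[OF g] by (intro kernel[OF h]) (simp add: h_def mult.commute)
    moreover have "g = (\<lambda>c. E c * h c)"
      using dual_group_cnj_mult[OF E] unfolding h_def by (auto simp: fun_eq_iff mult.commute mult.left_commute)
    ultimately have "ch g = ch E" using mult[OF E h] by simp
    also have "E = (\<lambda>c. \<Prod>s\<in>S. expG (\<lambda>c. r s * dual_coord S s c) c)"
      unfolding E_def expG_def lin_ext_sum[OF S, of r] by (simp add: cis_sum sum_distrib_left)
    also have "ch \<dots> = (\<Prod>s\<in>S. ch (expG (\<lambda>c. r s * dual_coord S s c)))"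
      by (rule character_prod[OF mult character_one[OF mult nrm] line])
    also have "\<dots> = cis (2 * pi * (\<Sum>s\<in>S. of_int (k s) * r s))" by (simp add: k cis_sum sum_distrib_left)
    also have "\<dots> = g (zcomb S k)" using dual_group_zcomb[OF g, of S r k] g_r by simp
    finally show ?thesis by simp
  qed
  then show ?thesis by blast
qed

lemma dual_end_eval:
  assumes tf: "torsion_free (UNIV :: 'a::ab_group_add set)" and fr: "finite_rank (UNIV :: 'a set)"
    and f: "cont_end (f :: ('a \<Rightarrow> complex) \<Rightarrow> ('a \<Rightarrow> complex))" and g: "g \<in> dual_group"
  shows "g (dual_end f c) = f g c"
proof -
  have f_mult: "f (\<lambda>c. g c * h c) = (\<lambda>c. f g c * f h c)" if "g \<in> dual_group" "h \<in> dual_group" for g h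
    using f that unfolding cont_end_def by blast
  have "\<exists>y. \<forall>g\<in>dual_group. g y = f g c"
  proof (rule continuous_character_is_evaluation[OF tf fr])
    show "continuous_on dual_group (\<lambda>g. f g c)"
      using f unfolding cont_end_def by (auto intro: continuous_on_compose2[OF continuous_on_product_coordinates])
    show "f (\<lambda>c. g c * h c) c = f g c * f h c" if "g \<in> dual_group" "h \<in> dual_group" for g h
      using f_mult[OF that] by simp
    show "norm (f g c) = 1" if "g \<in> dual_group" for g
      using f that dual_groupD(1) unfolding cont_end_def by blast
  qed
  then have "\<exists>!y. \<forall>g\<in>dual_group. g y = f g c" using dual_group_eval_inj[OF tf fr] by metis
  then have "\<forall>g\<in>dual_group. g (dual_end f c) = f g c" unfolding dual_end_def by (rule theI')
  with g show ?thesis by blast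
qed

locale solenoid_action =
  fixes \<rho> :: "'m::monoid_mult \<Rightarrow> ('x::ab_group_add \<Rightarrow> complex) \<Rightarrow> ('x \<Rightarrow> complex)"
  assumes torsion_free: "torsion_free (UNIV :: 'x set)"
    and finite_rank: "finite_rank (UNIV :: 'x set)"
    and action: "endo_action \<rho>"
begin

lemma rho_in_dual_group: "g \<in> dual_group \<Longrightarrow> \<rho> \<gamma> g \<in> dual_group"
  using action unfolding endo_action_def cont_end_def by blast

lemma rho_mult: "g \<in> dual_group \<Longrightarrow> \<rho> (\<gamma> * \<delta>) g = \<rho> \<gamma> (\<rho> \<delta> g)"
  using action unfolding endo_action_def by blast

lemma rho_one: "g \<in> dual_group \<Longrightarrow> \<rho> 1 g = g"
  using action unfolding endo_action_def by blast

lemma dual_end_rho_eval: "g \<in> dual_group \<Longrightarrow> g (dual_end (\<rho> \<gamma>) c) = \<rho> \<gamma> g c"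
  using dual_end_eval[OF torsion_free finite_rank] action unfolding endo_action_def by blast

lemma dual_group_eval_eqI: "(\<And>g. g \<in> dual_group \<Longrightarrow> g x = g y) \<Longrightarrow> (x::'x) = y"
  by (rule dual_group_eval_inj[OF torsion_free finite_rank])

lemma dual_end_rho_add: "dual_end (\<rho> \<gamma>) (x + y) = dual_end (\<rho> \<gamma>) x + dual_end (\<rho> \<gamma>) y"
  by (rule dual_group_eval_eqI)
    (simp add: dual_end_rho_eval dual_groupD(2) rho_in_dual_group)

lemma dual_end_rho_mult: "dual_end (\<rho> (\<gamma> * \<delta>)) c = dual_end (\<rho> \<delta>) (dual_end (\<rho> \<gamma>) c)"
  by (rule dual_group_eval_eqI) (simp add: dual_end_rho_eval rho_mult rho_in_dual_group)

lemma dual_end_rho_one: "dual_end (\<rho> 1) c = c"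
  by (rule dual_group_eval_eqI) (simp add: dual_end_rho_eval rho_one)

lemma rho_basis_closed:
  assumes "rho_basis \<rho> A" "a \<in> A"
  shows "dual_end (\<rho> \<gamma>) a \<in> A"
proof -
  obtain F where F: "A = (\<Union>\<delta>. dual_end (\<rho> \<delta>) ` F)" using assms(1) unfolding rho_basis_def by blast
  with assms(2) obtain \<delta> f where "f \<in> F" "a = dual_end (\<rho> \<delta>) f" by blast
  then have "dual_end (\<rho> \<gamma>) a = dual_end (\<rho> (\<delta> * \<gamma>)) f" by (simp add: dual_end_rho_mult)
  with F \<open>f \<in> F\<close> show ?thesis by blast
qed

lemma rho_basis_generators:
  assumes "rho_basis \<rho> A"
  obtains F where "finite F" "F \<subseteq> A" "A = (\<Union>\<gamma>. dual_end (\<rho> \<gamma>) ` F)"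
proof -
  obtain F where F: "finite F" "A = (\<Union>\<gamma>. dual_end (\<rho> \<gamma>) ` F)"
    using assms unfolding rho_basis_def by blast
  have "f \<in> A" if "f \<in> F" for f
    unfolding F(2) using that by (intro UN_I[of 1] image_eqI[of _ _ f]) (simp_all add: dual_end_rho_one)
  with F that show ?thesis by blast
qed

end

section \<open>Lifting small points of \<open>G\<close> to \<open>L(G)\<close>\<close>

definition basis_lift :: "'a::ab_group_add set \<Rightarrow> ('a \<Rightarrow> complex) \<Rightarrow> 'a \<Rightarrow> real" where
  "basis_lift S g = lin_ext S (\<lambda>s. circle_lift (g s))"

definition coord_height :: "'a::ab_group_add set \<Rightarrow> 'a \<Rightarrow> real" where
  "coord_height S q = of_int (fst (basis_coords S q)) + (\<Sum>s\<in>S. \<bar>of_int (snd (basis_coords S q) s)\<bar>)"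

text \<open>If \<open>n q = \<Sum> m\<^sub>s s\<close>, then \<open>n\<close> times either side of the claimed equation is a lift of \<open>g (n q)\<close>,
  so the two differ by an integer, of modulus less than \<open>(n + \<Sum> \<bar>m\<^sub>s\<bar>) \<epsilon> \<le> 1\<close>.\<close>

lemma basis_lift_eq_circle_lift:
  assumes S: "rat_basis S" and g: "g \<in> dual_group"
    and small_S: "\<forall>s\<in>S. \<bar>circle_lift (g s)\<bar> < \<epsilon>" and small_q: "\<bar>circle_lift (g q)\<bar> < \<epsilon>"
    and height: "coord_height S q * \<epsilon> \<le> 1"
  shows "basis_lift S g q = circle_lift (g q)"
proof -
  define n where "n = fst (basis_coords S q)"
  define m where "m = snd (basis_coords S q)"
  have n: "n > 0" "zsmul n q = zcomb S m" unfolding n_def m_def using basis_coords[OF S] by auto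
  let ?lift = "basis_lift S g" and ?\<tau> = "\<lambda>x. circle_lift (g x)"
  have g_\<tau>: "g x = cis (2 * pi * ?\<tau> x)" for x using cis_circle_lift[OF dual_groupD(1)[OF g]] by simp
  have lift_q: "of_int n * ?lift q = (\<Sum>s\<in>S. of_int (m s) * ?\<tau> s)"
  proof -
    have lift: "?lift \<in> lie_alg" unfolding basis_lift_def by (rule lin_ext_in_lie_alg[OF S])
    have "of_int n * ?lift q = ?lift (zcomb S m)" by (simp add: lie_alg_zsmul[OF lift] n(2)[symmetric])
    also have "\<dots> = (\<Sum>s\<in>S. of_int (m s) * ?\<tau> s)"
      using lie_alg_zcomb[OF lift, of S m] by (simp add: basis_lift_def lin_ext_basis[OF S])
    finally show ?thesis .
  qed
  have "cis (2 * pi * (of_int n * ?\<tau> q)) = cis (2 * pi * (\<Sum>s\<in>S. of_int (m s) * ?\<tau> s))"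
    using dual_group_cis_zsmul[OF g g_\<tau>[of q], of n] dual_group_zcomb[OF g g_\<tau>, of S m] n(2) by simp
  then have int: "of_int n * ?\<tau> q - of_int n * ?lift q \<in> \<int>"
    unfolding lift_q by (rule cis_eq_imp_diff_Ints)
  have "\<bar>of_int n * ?lift q\<bar> \<le> (\<Sum>s\<in>S. \<bar>of_int (m s)\<bar> * \<epsilon>)"
    unfolding lift_q using small_S
    by (intro order_trans[OF sum_abs] sum_mono) (simp add: abs_mult mult_left_mono less_imp_le)
  moreover have "\<bar>of_int n * ?\<tau> q\<bar> < of_int n * \<epsilon>" using small_q n(1) by (simp add: abs_mult)
  moreover have "(of_int n + (\<Sum>s\<in>S. \<bar>of_int (m s)\<bar>)) * \<epsilon> \<le> 1"
    using height by (simp add: coord_height_def n_def m_def)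
  ultimately have "\<bar>of_int n * ?\<tau> q - of_int n * ?lift q\<bar> < 1"
    by (simp add: distrib_right sum_distrib_right)
  with int have "of_int n * ?\<tau> q = of_int n * ?lift q" using Ints_nonzero_abs_less1 by fastforce
  with n(1) show ?thesis by simp
qed

lemma finite_exists_pos_mult_le_1:
  fixes f :: "'a \<Rightarrow> real"
  assumes "finite Q"
  shows "\<exists>\<epsilon>>0. \<forall>q\<in>Q. f q * \<epsilon> \<le> 1"
proof -
  define K where "K = Max (insert 1 (f ` Q))"
  have K: "1 \<le> K" "\<And>q. q \<in> Q \<Longrightarrow> f q \<le> K" using assms by (auto simp: K_def)
  then have "\<forall>q\<in>Q. f q * (1 / K) \<le> 1" by (simp add: field_simps)
  with K(1) show ?thesis by (intro exI[of _ "1 / K"]) simp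
qed

lemma ballA_subset_expG_ballA_star:
  assumes "agroup_span A = UNIV" "\<epsilon> \<le> C"
    and exact: "\<And>g. g \<in> dual_group \<Longrightarrow> \<forall>a\<in>A. \<bar>circle_lift (g a)\<bar> < \<epsilon> \<Longrightarrow>
      p g \<in> lie_alg \<and> (\<forall>a\<in>A. p g a = circle_lift (g a))"
  shows "ballA A \<epsilon> \<subseteq> expG ` ballA_star A C"
proof
  fix g assume "g \<in> ballA A \<epsilon>"
  then have g: "g \<in> dual_group" and sup: "(SUP a\<in>A. ereal (delta_circ (g a))) < ereal \<epsilon>"
    by (auto simp: ballA_def)
  have \<delta>: "delta_circ (g a) = \<bar>circle_lift (g a)\<bar>" for a
    by (rule delta_circ_eq_abs_circle_lift[OF dual_groupD(1)[OF g]])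
  have "\<bar>circle_lift (g a)\<bar> < \<epsilon>" if "a \<in> A" for a
    using le_less_trans[OF SUP_upper[OF that] sup] \<delta>[of a] by simp
  with exact[OF g] have p: "p g \<in> lie_alg" "\<And>a. a \<in> A \<Longrightarrow> p g a = circle_lift (g a)" by auto
  have "expG (p g) = g"
  proof (rule dual_group_eqI[OF expG_in_dual_group[OF p(1)] g _ assms(1)])
    fix a assume "a \<in> A"
    then show "expG (p g) a = g a"
      using p(2) cis_circle_lift[OF dual_groupD(1)[OF g]] by (simp add: expG_def)
  qed
  moreover have "(SUP a\<in>A. ereal \<bar>p g a\<bar>) < ereal C"
  proof -
    have "(SUP a\<in>A. ereal \<bar>p g a\<bar>) = (SUP a\<in>A. ereal (delta_circ (g a)))"
      using p(2) \<delta> by (intro SUP_cong) auto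
    also have "\<dots> < ereal \<epsilon>" by (rule sup)
    also have "\<dots> \<le> ereal C" using assms(2) by simp
    finally show ?thesis .
  qed
  ultimately show "g \<in> expG ` ballA_star A C"
    using p(1) by (intro image_eqI[of _ _ "p g"]) (auto simp: ballA_star_def)
qed

context solenoid_action
begin

lemma basis_lift_equivariant:
  assumes S: "rat_basis S" and Gen: "monoid_span Gen = UNIV"
    and V: "V \<subseteq> dual_group" "\<And>g \<gamma>. g \<in> V \<Longrightarrow> \<rho> \<gamma> g \<in> V"
    and on_gen: "\<And>g \<gamma> s. g \<in> V \<Longrightarrow> \<gamma> \<in> Gen \<Longrightarrow> s \<in> S \<Longrightarrow>
      basis_lift S g (dual_end (\<rho> \<gamma>) s) = circle_lift (g (dual_end (\<rho> \<gamma>) s))"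
    and "g \<in> V"
  shows "basis_lift S (\<rho> \<gamma> g) x = basis_lift S g (dual_end (\<rho> \<gamma>) x)"
proof -
  have lift: "basis_lift S g \<in> lie_alg" for g unfolding basis_lift_def by (rule lin_ext_in_lie_alg[OF S])
  have "\<gamma> \<in> monoid_span Gen" using Gen by simp
  then have "\<forall>g\<in>V. \<forall>x. basis_lift S (\<rho> \<gamma> g) x = basis_lift S g (dual_end (\<rho> \<gamma>) x)"
  proof (induction \<gamma> rule: monoid_span.induct)
    case one
    show ?case using V(1) by (auto simp: rho_one dual_end_rho_one)
  next
    case (gen \<gamma>)
    show ?case
    proof (intro ballI allI)
      fix g x assume g: "g \<in> V"
      show "basis_lift S (\<rho> \<gamma> g) x = basis_lift S g (dual_end (\<rho> \<gamma>) x)"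
      proof (rule lie_alg_eqI[OF S lift])
        show "(\<lambda>x. basis_lift S g (dual_end (\<rho> \<gamma>) x)) \<in> lie_alg"
          using lift[of g] by (simp add: lie_alg_def dual_end_rho_add)
        fix s assume "s \<in> S"
        then have "basis_lift S (\<rho> \<gamma> g) s = circle_lift (\<rho> \<gamma> g s)"
          by (simp add: basis_lift_def lin_ext_basis[OF S])
        also have "\<dots> = circle_lift (g (dual_end (\<rho> \<gamma>) s))" using g V(1) by (auto simp: dual_end_rho_eval)
        also have "\<dots> = basis_lift S g (dual_end (\<rho> \<gamma>) s)" using on_gen[OF g gen \<open>s \<in> S\<close>] by simp
        finally show "basis_lift S (\<rho> \<gamma> g) s = basis_lift S g (dual_end (\<rho> \<gamma>) s)" .
      qed
    qed
  next
    case (mult \<gamma> \<delta>)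
    then show ?case using V by (auto simp: rho_mult dual_end_rho_mult subset_iff)
  qed
  with \<open>g \<in> V\<close> show ?thesis by blast
qed

lemma exists_radius_basis_lift_exact:
  assumes "finitely_generated_monoid (UNIV :: 'm set)" and A: "rho_basis \<rho> A"
  shows "\<exists>\<epsilon>>0. \<exists>S. rat_basis S \<and> (\<forall>g\<in>dual_group. (\<forall>a\<in>A. \<bar>circle_lift (g a)\<bar> < \<epsilon>) \<longrightarrow>
    (\<forall>a\<in>A. basis_lift S g a = circle_lift (g a)))"
proof -
  obtain F where F: "finite F" "F \<subseteq> A" "A = (\<Union>\<gamma>. dual_end (\<rho> \<gamma>) ` F)"
    using rho_basis_generators[OF A] by blast
  obtain S where S: "S \<subseteq> A" "rat_basis S"
    using exists_rat_basis_subset[OF finite_rank] A unfolding rho_basis_def by blast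
  obtain Gen :: "'m set" where Gen: "finite Gen" "monoid_span Gen = UNIV"
    using assms(1) unfolding finitely_generated_monoid_def by blast
  define Q where "Q = F \<union> (\<Union>\<gamma>\<in>Gen. dual_end (\<rho> \<gamma>) ` S)"
  have "finite Q" unfolding Q_def using F(1) Gen(1) rat_basisD(1)[OF S(2)] by simp
  then obtain \<epsilon> where \<epsilon>: "\<epsilon> > 0" "\<And>q. q \<in> Q \<Longrightarrow> coord_height S q * \<epsilon> \<le> 1"
    using finite_exists_pos_mult_le_1[of Q "coord_height S"] by blast
  have Q_A: "Q \<subseteq> A" using F(2) S(1) rho_basis_closed[OF A] unfolding Q_def by blast
  define V where "V = {g\<in>dual_group. \<forall>a\<in>A. \<bar>circle_lift (g a)\<bar> < \<epsilon>}"
  have exact_Q: "basis_lift S g q = circle_lift (g q)" if "g \<in> V" "q \<in> Q" for g q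
    using that S(1) Q_A by (intro basis_lift_eq_circle_lift[OF S(2) _ _ _ \<epsilon>(2)]) (auto simp: V_def)
  have V_closed: "\<rho> \<gamma> g \<in> V" if "g \<in> V" for g \<gamma>
    using that rho_basis_closed[OF A] by (auto simp: V_def rho_in_dual_group dual_end_rho_eval[symmetric])
  have equivariant: "basis_lift S (\<rho> \<gamma> g) x = basis_lift S g (dual_end (\<rho> \<gamma>) x)" if "g \<in> V" for g \<gamma> x
  proof (rule basis_lift_equivariant[OF S(2) Gen(2) _ V_closed _ that])
    show "V \<subseteq> dual_group" by (auto simp: V_def)
    fix g \<gamma> s assume "g \<in> V" "\<gamma> \<in> Gen" "s \<in> S"
    then show "basis_lift S g (dual_end (\<rho> \<gamma>) s) = circle_lift (g (dual_end (\<rho> \<gamma>) s))"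
      by (intro exact_Q) (auto simp: Q_def)
  qed
  have "basis_lift S g a = circle_lift (g a)" if g: "g \<in> V" and "a \<in> A" for g a
  proof -
    obtain \<gamma> f where f: "f \<in> F" "a = dual_end (\<rho> \<gamma>) f" using \<open>a \<in> A\<close> F(3) by blast
    have "basis_lift S g a = basis_lift S (\<rho> \<gamma> g) f" using equivariant[OF g] f(2) by simp
    also have "\<dots> = circle_lift (\<rho> \<gamma> g f)" using exact_Q[OF V_closed[OF g]] f(1) by (simp add: Q_def)
    also have "\<dots> = circle_lift (g a)" using g f(2) by (simp add: V_def dual_end_rho_eval)
    finally show ?thesis .
  qed
  then show ?thesis using \<epsilon>(1) S(2) unfolding V_def by blast
qed

end

theorem theorem4p6:
  fixes \<rho> :: "'m::monoid_mult \<Rightarrow> ('x::ab_group_add \<Rightarrow> complex) \<Rightarrow> ('x \<Rightarrow> complex)"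
    and A :: "'x set" and C :: real
  assumes "finitely_generated_monoid (UNIV :: 'm set)"
    and "torsion_free (UNIV :: 'x set)"
    and "finite_rank (UNIV :: 'x set)"
    and "endo_action \<rho>"
    and "rho_basis \<rho> A"
    and "C > 0"
  shows "\<exists>\<epsilon>>0. ballA A \<epsilon> \<subseteq> expG ` ballA_star A C"
proof -
  interpret solenoid_action \<rho> using assms(2-4) by unfold_locales
  obtain \<epsilon> S where \<epsilon>: "\<epsilon> > 0" and S: "rat_basis S"
    and exact: "\<And>g. g \<in> dual_group \<Longrightarrow> \<forall>a\<in>A. \<bar>circle_lift (g a)\<bar> < \<epsilon> \<Longrightarrow>
      \<forall>a\<in>A. basis_lift S g a = circle_lift (g a)"
    using exists_radius_basis_lift_exact[OF assms(1,5)] by blast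
  have "ballA A (min \<epsilon> C) \<subseteq> expG ` ballA_star A C"
  proof (rule ballA_subset_expG_ballA_star)
    show "agroup_span A = UNIV" using assms(5) by (simp add: rho_basis_def)
    show "basis_lift S g \<in> lie_alg \<and> (\<forall>a\<in>A. basis_lift S g a = circle_lift (g a))"
      if "g \<in> dual_group" "\<forall>a\<in>A. \<bar>circle_lift (g a)\<bar> < min \<epsilon> C" for g
      using that exact unfolding basis_lift_def by (simp add: lin_ext_in_lie_alg[OF S])
  qed simp
  with \<epsilon> assms(6) show ?thesis by (intro exI[of _ "min \<epsilon> C"]) simp
qed

end
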